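(* Let $m,n\ge 2$. Then $(H(m),H(n),H(m,n),H(n,m))$ is a Hopf-Galois system, with structure maps $\alpha,\beta,\gamma,\delta$ all given on generators by $x^{(\alpha)}_{ij}\mapsto\sum_k x^{(\alpha)}_{ik}\otimes x^{(\alpha)}_{kj}$.
   Context: $k$ is a field. For $m,n\in\mathbb N^*$, $H(m,n)$ is the universal algebra with generators $x^{(\alpha)}_{ij}$, $1\le i\le m$, $1\le j\le n$, $\alpha\in\mathbb N$, and relations $x^{(\alpha)}\,{}^tx^{(\alpha+1)}=I_m$ and ${}^tx^{(\alpha+1)}x^{(\alpha)}=I_n$ for all $\alpha\in\mathbb N$, where $x^{(\alpha)}=(x^{(\alpha)}_{ij})$. $H(m):=H(m,m)$ is the free Hopf algebra on the matrix coalgebra $M_m(k)^*$, with $\Delta(x^{(\alpha)}_{ij})=\sum_k x^{(\alpha)}_{ik}\otimes x^{(\alpha)}_{kj}$, $\varepsilon(x^{(\alpha)}_{ij})=\delta_{ij}$, $S(x^{(\alpha)})={}^tx^{(\alpha+1)}$. A Hopf-Galois system consists of four non-zero $k$-algebras $(A,B,Z,T)$ with: (HG1) $A,B$ bialgebras; (HG2) $Z$ an $A$-$B$-bicomodule algebra with coactions $\alpha:Z\to A\otimes Z$, $\beta:Z\to Z\otimes B$; (HG3) algebra morphisms $\gamma:A\to Z\otimes T$, $\delta:B\to T\otimes Z$ with $(\gamma\otimes 1_Z)\alpha=(1_Z\otimes\delta)\beta$, $(\alpha\otimes 1_T)\gamma=(1_A\otimes\gamma)\Delta_A$, $(1_T\otimes\beta)\delta=(\delta\otimes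 1_B)\Delta_B$; (HG4) a linear map $S:T\to Z$ with $m_Z(1_Z\otimes S)\gamma=u_Z\varepsilon_A$ and $m_Z(S\otimes 1_Z)\delta=u_Z\varepsilon_B$. *)

theory Defs
  imports "HOL-Library.Poly_Mapping" "HOL-Library.Product_Plus"
begin

text \<open>Words over an alphabet form the free monoid (addition = concatenation).
  The monoid algebra ('v word => k) is the free (non-commutative)
  associative unital k-algebra on the alphabet 'v.\<close>

datatype 'v word = Word (letters: "'v list")

instantiation word :: (type) monoid_add
begin
definition zero_word_def: "0 = Word []"
definition plus_word_def: "u + w = Word (letters u @ letters w)"
instance by standard (simp_all add: zero_word_def plus_word_def)
end

text \<open>For monoids M, N the monoid algebra of M \<times> N is k[M] \<otimes> k[N]; so the
  free algebra on pairs of words is the tensor product of free algebras.\<close>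

definition sc :: "'k::semiring_1 \<Rightarrow> ('a \<Rightarrow>\<^sub>0 'k) \<Rightarrow> ('a \<Rightarrow>\<^sub>0 'k)" where
  "sc c p = Poly_Mapping.map (\<lambda>x. c * x) p"

definition linext :: "('a \<Rightarrow> ('b \<Rightarrow>\<^sub>0 'k::semiring_1)) \<Rightarrow> ('a \<Rightarrow>\<^sub>0 'k) \<Rightarrow> ('b \<Rightarrow>\<^sub>0 'k)" where
  "linext f p = (\<Sum>a\<in>Poly_Mapping.keys p. sc (Poly_Mapping.lookup p a) (f a))"

definition ext :: "('v \<Rightarrow> ('b::monoid_add \<Rightarrow>\<^sub>0 'k::semiring_1)) \<Rightarrow> ('v word \<Rightarrow>\<^sub>0 'k) \<Rightarrow> ('b \<Rightarrow>\<^sub>0 'k)" where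
  "ext g = linext (\<lambda>w. prod_list (map g (letters w)))"

definition tens :: "('a \<Rightarrow>\<^sub>0 'k::semiring_1) \<Rightarrow> ('b \<Rightarrow>\<^sub>0 'k) \<Rightarrow> ('a \<times> 'b \<Rightarrow>\<^sub>0 'k)" where
  "tens p q = linext (\<lambda>a. linext (\<lambda>b. Poly_Mapping.single (a, b) 1) q) p"

definition tmap :: "(('a \<Rightarrow>\<^sub>0 'k::semiring_1) \<Rightarrow> ('c \<Rightarrow>\<^sub>0 'k)) \<Rightarrow> (('b \<Rightarrow>\<^sub>0 'k) \<Rightarrow> ('d \<Rightarrow>\<^sub>0 'k))
    \<Rightarrow> ('a \<times> 'b \<Rightarrow>\<^sub>0 'k) \<Rightarrow> ('c \<times> 'd \<Rightarrow>\<^sub>0 'k)" where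
  "tmap f g = linext (\<lambda>(u, w). tens (f (Poly_Mapping.single u 1)) (g (Poly_Mapping.single w 1)))"

definition assocr :: "(('a \<times> 'b) \<times> 'c \<Rightarrow>\<^sub>0 'k::semiring_1) \<Rightarrow> ('a \<times> 'b \<times> 'c \<Rightarrow>\<^sub>0 'k)" where
  "assocr = linext (\<lambda>((a, b), c). Poly_Mapping.single (a, (b, c)) 1)"

definition mulmap :: "('a \<times> 'a \<Rightarrow>\<^sub>0 'k::semiring_1) \<Rightarrow> ('a::monoid_add \<Rightarrow>\<^sub>0 'k)" where
  "mulmap = linext (\<lambda>(u, w). Poly_Mapping.single (u + w) 1)"

text \<open>(\<epsilon> \<otimes> id) and (id \<otimes> \<epsilon>) composed with the canonical isomorphisms k \<otimes> V = V = V \<otimes> k.\<close>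
definition lcounit :: "(('a \<Rightarrow>\<^sub>0 'k::semiring_1) \<Rightarrow> 'k) \<Rightarrow> ('a \<times> 'b \<Rightarrow>\<^sub>0 'k) \<Rightarrow> ('b \<Rightarrow>\<^sub>0 'k)" where
  "lcounit e = linext (\<lambda>(u, w). sc (e (Poly_Mapping.single u 1)) (Poly_Mapping.single w 1))"

definition rcounit :: "(('b \<Rightarrow>\<^sub>0 'k::semiring_1) \<Rightarrow> 'k) \<Rightarrow> ('a \<times> 'b \<Rightarrow>\<^sub>0 'k) \<Rightarrow> ('a \<Rightarrow>\<^sub>0 'k)" where
  "rcounit e = linext (\<lambda>(u, w). sc (e (Poly_Mapping.single w 1)) (Poly_Mapping.single u 1))"

inductive_set ideal_of :: "'a::ring_1 set \<Rightarrow> 'a set" for R where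
  zero: "0 \<in> ideal_of R"
| gen: "r \<in> R \<Longrightarrow> a * r * b \<in> ideal_of R"
| add: "x \<in> ideal_of R \<Longrightarrow> y \<in> ideal_of R \<Longrightarrow> x + y \<in> ideal_of R"

text \<open>A presented algebra is given by a free algebra and a set R of relations; its
  elements are represented by elements of the free algebra, modulo ideal_of R.\<close>
definition eqv :: "'a::ring_1 set \<Rightarrow> 'a \<Rightarrow> 'a \<Rightarrow> bool" where
  "eqv R p q \<longleftrightarrow> p - q \<in> ideal_of R"

text \<open>Relations presenting the tensor product of two presented algebras:
  (k\<langle>X\<rangle>/(R)) \<otimes> (k\<langle>Y\<rangle>/(R')) = k[X* \<times> Y*]/(R \<otimes> 1, 1 \<otimes> R').\<close>
definition trel :: "('a::monoid_add \<Rightarrow>\<^sub>0 'k::semiring_1) set \<Rightarrow> ('b::monoid_add \<Rightarrow>\<^sub>0 'k) set \<Rightarrow> ('a \<times> 'b \<Rightarrow>\<^sub>0 'k) set" where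
  "trel R R' = (\<lambda>p. tens p 1) ` R \<union> (\<lambda>q. tens 1 q) ` R'"

definition nonzero_alg :: "'a::ring_1 set \<Rightarrow> bool" where
  "nonzero_alg R \<longleftrightarrow> (1::'a) \<notin> ideal_of R"

definition lin_map :: "('a::monoid_add \<Rightarrow>\<^sub>0 'k::comm_ring_1) set \<Rightarrow> ('b::monoid_add \<Rightarrow>\<^sub>0 'k) set
    \<Rightarrow> (('a \<Rightarrow>\<^sub>0 'k) \<Rightarrow> ('b \<Rightarrow>\<^sub>0 'k)) \<Rightarrow> bool" where
  "lin_map R R' f \<longleftrightarrow>
     (\<forall>p q. eqv R p q \<longrightarrow> eqv R' (f p) (f q)) \<and>
     (\<forall>p q. eqv R' (f (p + q)) (f p + f q)) \<and>
     (\<forall>c p. eqv R' (f (sc c p)) (sc c (f p)))"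

definition alg_map :: "('a::monoid_add \<Rightarrow>\<^sub>0 'k::comm_ring_1) set \<Rightarrow> ('b::monoid_add \<Rightarrow>\<^sub>0 'k) set
    \<Rightarrow> (('a \<Rightarrow>\<^sub>0 'k) \<Rightarrow> ('b \<Rightarrow>\<^sub>0 'k)) \<Rightarrow> bool" where
  "alg_map R R' f \<longleftrightarrow> lin_map R R' f \<and>
     (\<forall>p q. eqv R' (f (p * q)) (f p * f q)) \<and> eqv R' (f 1) 1"

definition char_map :: "('a::monoid_add \<Rightarrow>\<^sub>0 'k::comm_ring_1) set \<Rightarrow> (('a \<Rightarrow>\<^sub>0 'k) \<Rightarrow> 'k) \<Rightarrow> bool" where
  "char_map R e \<longleftrightarrow>
     (\<forall>p q. eqv R p q \<longrightarrow> e p = e q) \<and>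
     (\<forall>p q. e (p + q) = e p + e q) \<and> (\<forall>c p. e (sc c p) = c * e p) \<and>
     (\<forall>p q. e (p * q) = e p * e q) \<and> e 1 = 1"

definition bialgebra :: "('a::monoid_add \<Rightarrow>\<^sub>0 'k::comm_ring_1) set
    \<Rightarrow> (('a \<Rightarrow>\<^sub>0 'k) \<Rightarrow> ('a \<times> 'a \<Rightarrow>\<^sub>0 'k)) \<Rightarrow> (('a \<Rightarrow>\<^sub>0 'k) \<Rightarrow> 'k) \<Rightarrow> bool" where
  "bialgebra R D e \<longleftrightarrow>
     alg_map R (trel R R) D \<and> char_map R e \<and>
     (\<forall>p. eqv (trel R (trel R R)) (assocr (tmap D id (D p))) (tmap id D (D p))) \<and>
     (\<forall>p. eqv R (lcounit e (D p)) p) \<and>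
     (\<forall>p. eqv R (rcounit e (D p)) p)"

text \<open>Hopf-Galois system (A,B,Z,T), conditions (HG1)-(HG4); the algebras are given by
  relation sets RA RB RZ RT, the structure maps by DA eA DB eB al be ga de.\<close>
definition hopf_galois_system ::
  "('a::monoid_add \<Rightarrow>\<^sub>0 'k::comm_ring_1) set \<Rightarrow> ('b::monoid_add \<Rightarrow>\<^sub>0 'k) set
   \<Rightarrow> ('z::monoid_add \<Rightarrow>\<^sub>0 'k) set \<Rightarrow> ('t::monoid_add \<Rightarrow>\<^sub>0 'k) set
   \<Rightarrow> (('a \<Rightarrow>\<^sub>0 'k) \<Rightarrow> ('a \<times> 'a \<Rightarrow>\<^sub>0 'k)) \<Rightarrow> (('a \<Rightarrow>\<^sub>0 'k) \<Rightarrow> 'k)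
   \<Rightarrow> (('b \<Rightarrow>\<^sub>0 'k) \<Rightarrow> ('b \<times> 'b \<Rightarrow>\<^sub>0 'k)) \<Rightarrow> (('b \<Rightarrow>\<^sub>0 'k) \<Rightarrow> 'k)
   \<Rightarrow> (('z \<Rightarrow>\<^sub>0 'k) \<Rightarrow> ('a \<times> 'z \<Rightarrow>\<^sub>0 'k)) \<Rightarrow> (('z \<Rightarrow>\<^sub>0 'k) \<Rightarrow> ('z \<times> 'b \<Rightarrow>\<^sub>0 'k))
   \<Rightarrow> (('a \<Rightarrow>\<^sub>0 'k) \<Rightarrow> ('z \<times> 't \<Rightarrow>\<^sub>0 'k)) \<Rightarrow> (('b \<Rightarrow>\<^sub>0 'k) \<Rightarrow> ('t \<times> 'z \<Rightarrow>\<^sub>0 'k)) \<Rightarrow> bool" where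
  "hopf_galois_system RA RB RZ RT DA eA DB eB al be ga de \<longleftrightarrow>
     nonzero_alg RA \<and> nonzero_alg RB \<and> nonzero_alg RZ \<and> nonzero_alg RT \<and>
     \<comment> \<open>(HG1)\<close>
     bialgebra RA DA eA \<and> bialgebra RB DB eB \<and>
     \<comment> \<open>(HG2)\<close>
     alg_map RZ (trel RA RZ) al \<and> alg_map RZ (trel RZ RB) be \<and>
     (\<forall>p. eqv (trel RA (trel RA RZ)) (assocr (tmap DA id (al p))) (tmap id al (al p))) \<and>
     (\<forall>p. eqv RZ (lcounit eA (al p)) p) \<and>
     (\<forall>p. eqv (trel RZ (trel RB RB)) (assocr (tmap be id (be p))) (tmap id DB (be p))) \<and>
     (\<forall>p. eqv RZ (rcounit eB (be p)) p) \<and>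
     (\<forall>p. eqv (trel RA (trel RZ RB)) (assocr (tmap al id (be p))) (tmap id be (al p))) \<and>
     \<comment> \<open>(HG3)\<close>
     alg_map RA (trel RZ RT) ga \<and> alg_map RB (trel RT RZ) de \<and>
     (\<forall>p. eqv (trel RZ (trel RT RZ)) (assocr (tmap ga id (al p))) (tmap id de (be p))) \<and>
     (\<forall>p. eqv (trel RA (trel RZ RT)) (assocr (tmap al id (ga p))) (tmap id ga (DA p))) \<and>
     (\<forall>p. eqv (trel RT (trel RZ RB)) (tmap id be (de p)) (assocr (tmap de id (DB p)))) \<and>
     \<comment> \<open>(HG4)\<close>
     (\<exists>S. lin_map RT RZ S \<and>
        (\<forall>p. eqv RZ (mulmap (tmap id S (ga p))) (sc (eA p) 1)) \<and>
        (\<forall>p. eqv RZ (mulmap (tmap S id (de p))) (sc (eB p) 1)))"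

text \<open>Generators x^(a)_ij are encoded as letters (i, j, a).  All algebras use the
  alphabet nat \<times> nat \<times> nat; letters outside the index range 1..m, 1..n are set to 0
  by relations, so they do not change the algebra.\<close>
type_synonym gen = "nat \<times> nat \<times> nat"

definition X :: "nat \<Rightarrow> nat \<Rightarrow> nat \<Rightarrow> (gen word \<Rightarrow>\<^sub>0 'k::semiring_1)" where
  "X i j a = Poly_Mapping.single (Word [(i, j, a)]) 1"

definition hrels :: "nat \<Rightarrow> nat \<Rightarrow> (gen word \<Rightarrow>\<^sub>0 'k::field) set" where
  "hrels m n =
     {X i j a | i j a. \<not> (i \<in> {1..m} \<and> j \<in> {1..n})} \<union>
     {(\<Sum>l\<in>{1..n}. X i l a * X i' l (Suc a)) - (if i = i' then 1 else 0) | i i' a.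
        i \<in> {1..m} \<and> i' \<in> {1..m}} \<union>
     {(\<Sum>l\<in>{1..m}. X l j (Suc a) * X l j' a) - (if j = j' then 1 else 0) | j j' a.
        j \<in> {1..n} \<and> j' \<in> {1..n}}"

definition gcop :: "nat \<Rightarrow> gen \<Rightarrow> (gen word \<times> gen word \<Rightarrow>\<^sub>0 'k::field)" where
  "gcop K = (\<lambda>(i, j, a). \<Sum>k\<in>{1..K}. tens (X i k a) (X k j a))"

definition heps :: "nat \<Rightarrow> (gen word \<Rightarrow>\<^sub>0 'k::field) \<Rightarrow> 'k" where
  "heps m p = (\<Sum>w\<in>Poly_Mapping.keys p. Poly_Mapping.lookup p w *
      prod_list (map (\<lambda>(i, j, a). if i = j \<and> i \<in> {1..m} then 1 else 0) (letters w)))"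

end

theory Submission
  imports Defs
begin

text \<open>All four structure maps are the comultiplication x(a)_(i,j) \<mapsto> \<Sum>_k x(a)_(i,k) \<otimes> x(a)_(k,j)
  of the free algebra.  It sends the relations of H(p, q) into the ideal defining
  H(p, K) \<otimes> H(K, q), since contracting one tensor factor by a relation leaves the relation in the
  other; coassociativity and the counit laws are checked on generators.  For (HG4) take
  S(x(a)_(i,j)) = x(a+1)_(j,i), an anti-homomorphism H(n, m) \<rightarrow> H(m, n).  On generators
  m (id \<otimes> S) \<Delta> is the left-hand side of a defining relation, and
  m (id \<otimes> S) \<Delta>(x y) = \<Sum> x' m (id \<otimes> S) \<Delta>(y) S(x''), so the identity spreads to all products.

  The substantial part is that H(p, q) \<noteq> 0 for p, q \<ge> 2, proved with normal forms in the spirit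
  of Bergman's diamond lemma.  Solving each relation for one summand whose index is a pivot
  (1 at even levels, 2 at odd ones) gives a rewriting system on words, and the span of the
  reduced words carries an action of the free algebra by reduction of g w.  The relations act
  as zero on it, because the only overlaps resolve, while 1 acts as the identity, so 1 is not
  in the ideal of relations.\<close>

lemma lookup_sc: "Poly_Mapping.lookup (sc c p) w = c * Poly_Mapping.lookup p w"
  by (simp add: sc_def map.rep_eq when_def)

lemma sc_eq_single_zero_mult: "sc c p = Poly_Mapping.single 0 c * p"
  by (simp add: sc_def mult_map_scale_conv_mult)

lemma sc_add: "sc c (p + q) = sc c p + sc c q"
  by (rule poly_mapping_eqI) (simp add: lookup_sc lookup_add distrib_left)

lemma sc_add_left: "sc (c + d) p = sc c p + sc d p"
  by (rule poly_mapping_eqI) (simp add: lookup_sc lookup_add distrib_right)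

lemma sc_sc: "sc c (sc d p) = sc (c * d) p"
  by (rule poly_mapping_eqI) (simp add: lookup_sc mult.assoc)

lemma sc_one [simp]: "sc 1 p = p"
  by (rule poly_mapping_eqI) (simp add: lookup_sc)

lemma sc_zero [simp]: "sc 0 p = 0" "sc c 0 = 0"
  by (rule poly_mapping_eqI, simp add: lookup_sc)+

lemma sc_single: "sc c (Poly_Mapping.single w d) = Poly_Mapping.single w (c * d)"
  by (rule poly_mapping_eqI) (simp add: lookup_sc lookup_single when_def)

lemma sc_sum: "sc c (sum f A) = (\<Sum>x\<in>A. sc c (f x))"
  by (induction A rule: infinite_finite_induct) (auto simp: sc_add)

lemma poly_mapping_induct [case_names zero single add]:
  assumes "P 0" "\<And>w c. P (Poly_Mapping.single w c)" "\<And>p q. P p \<Longrightarrow> P q \<Longrightarrow> P (p + q)"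
  shows "P (p :: 'a \<Rightarrow>\<^sub>0 'k::comm_monoid_add)"
proof -
  have expand: "p = (\<Sum>w\<in>Poly_Mapping.keys p. Poly_Mapping.single w (Poly_Mapping.lookup p w))"
    by (rule poly_mapping_eqI) (simp add: lookup_sum lookup_single when_def in_keys_iff)
  have "P (\<Sum>w\<in>A. Poly_Mapping.single w (Poly_Mapping.lookup p w))" if "finite A" for A
    using that by (induction A rule: finite_induct) (auto simp: assms)
  then show ?thesis by (subst expand) simp
qed

lemma single_zero_mult_commute:
  "p * Poly_Mapping.single 0 c = Poly_Mapping.single 0 c * (p :: 'a::monoid_add \<Rightarrow>\<^sub>0 'k::comm_semiring_1)"
proof (induction p rule: poly_mapping_induct)
  case (single w d) then show ?case by (simp add: mult_single mult.commute)
qed (simp_all add: distrib_left distrib_right)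

lemma sc_mult_left: "sc c (p * q) = sc c p * q"
  by (simp add: sc_eq_single_zero_mult mult.assoc)

lemma sc_mult_right: "sc c (p * q) = p * sc c (q :: 'a::monoid_add \<Rightarrow>\<^sub>0 'k::comm_semiring_1)"
  by (simp add: sc_eq_single_zero_mult mult.assoc flip: single_zero_mult_commute)

lemma mult_sc_one_mult: "p * sc c 1 * q = sc c (p * (q :: 'a::monoid_add \<Rightarrow>\<^sub>0 'k::comm_semiring_1))"
  by (simp add: sc_mult_right[symmetric] sc_mult_left[symmetric])

lemma sc_one_eq_single_zero: "sc c (1 :: 'a::monoid_add \<Rightarrow>\<^sub>0 'k::comm_semiring_1) = Poly_Mapping.single 0 c"
  by (simp add: sc_eq_single_zero_mult)

lemma sum_swap3:
  "(\<Sum>l\<in>L. \<Sum>k\<in>K. \<Sum>k'\<in>K'. f l k k') = (\<Sum>k\<in>K. \<Sum>k'\<in>K'. \<Sum>l\<in>L. (f l k k' :: 'a::comm_monoid_add))"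
proof -
  have "(\<Sum>l\<in>L. \<Sum>k\<in>K. \<Sum>k'\<in>K'. f l k k') = (\<Sum>k\<in>K. \<Sum>l\<in>L. \<Sum>k'\<in>K'. f l k k')"
    by (rule sum.swap)
  also have "\<dots> = (\<Sum>k\<in>K. \<Sum>k'\<in>K'. \<Sum>l\<in>L. f l k k')"
    by (simp only: sum.swap[of _ K' L])
  finally show ?thesis .
qed

lemma sum_single: "(\<Sum>x\<in>A. Poly_Mapping.single k (f x)) = Poly_Mapping.single k (sum f A)"
  by (induction A rule: infinite_finite_induct) (simp_all add: single_add)

lemma prod_list_single_zero:
  "prod_list (map (\<lambda>x. Poly_Mapping.single 0 (f x)) xs)
     = Poly_Mapping.single (0 :: 'a::monoid_add) (prod_list (map f xs) :: 'k::comm_semiring_1)"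
  by (induction xs) (simp_all add: mult_single flip: single_one)

lemma lookup_linext: "Poly_Mapping.lookup (linext g p) z =
   (\<Sum>w\<in>Poly_Mapping.keys p. Poly_Mapping.lookup p w * Poly_Mapping.lookup (g w) z)"
  by (simp add: linext_def lookup_sum lookup_sc)

lemma linext_add: "linext g (p + q) = linext g p + linext g q"
proof (rule poly_mapping_eqI)
  fix z
  show "Poly_Mapping.lookup (linext g (p + q)) z = Poly_Mapping.lookup (linext g p + linext g q) z"
    unfolding lookup_add[of "linext g p"] lookup_linext
    by (rule setsum_keys_plus_distrib[where f="\<lambda>k v. v * Poly_Mapping.lookup (g k) z"])
       (simp_all add: distrib_right)
qed

lemma linext_sc: "linext g (sc c p) = sc c (linext g p)"
proof (rule poly_mapping_eqI)
  fix z
  have "(\<Sum>w\<in>Poly_Mapping.keys (sc c p). c * Poly_Mapping.lookup p w * Poly_Mapping.lookup (g w) z)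
      = (\<Sum>w\<in>Poly_Mapping.keys p. c * Poly_Mapping.lookup p w * Poly_Mapping.lookup (g w) z)"
    by (rule sum.mono_neutral_left) (auto simp: in_keys_iff lookup_sc)
  then show "Poly_Mapping.lookup (linext g (sc c p)) z = Poly_Mapping.lookup (sc c (linext g p)) z"
    by (simp add: lookup_linext lookup_sc sum_distrib_left mult.assoc)
qed

lemma linext_zero [simp]: "linext g 0 = 0"
  by (simp add: linext_def)

lemma linext_single: "linext g (Poly_Mapping.single w c) = sc c (g w)"
  by (cases "c = 0") (simp_all add: linext_def)

lemma keys_linext: "Poly_Mapping.keys (linext g p) \<subseteq> (\<Union>w\<in>Poly_Mapping.keys p. Poly_Mapping.keys (g w))"
proof
  fix z assume "z \<in> Poly_Mapping.keys (linext g p)"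
  then have "(\<Sum>w\<in>Poly_Mapping.keys p. Poly_Mapping.lookup p w * Poly_Mapping.lookup (g w) z) \<noteq> 0"
    by (simp add: in_keys_iff lookup_linext)
  then obtain w where "w \<in> Poly_Mapping.keys p" "Poly_Mapping.lookup (g w) z \<noteq> 0"
    by (metis (no_types, lifting) mult_zero_right sum.neutral)
  then show "z \<in> (\<Union>w\<in>Poly_Mapping.keys p. Poly_Mapping.keys (g w))" by (auto simp: in_keys_iff)
qed

lemma linext_cong [fundef_cong]:
  "p = q \<Longrightarrow> (\<And>v. v \<in> Poly_Mapping.keys q \<Longrightarrow> f v = g v) \<Longrightarrow> linext f p = linext g q"
  by (simp add: linext_def)

lemma keys_delta_minus_sum_linext:
  assumes "v \<in> Poly_Mapping.keys ((if d then Poly_Mapping.single u (1::'k::comm_ring_1) else 0)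
    - (\<Sum>l\<in>L. linext (F l) (G l)))"
  shows "v = u \<or> (\<exists>l\<in>L. \<exists>x\<in>Poly_Mapping.keys (G l). v \<in> Poly_Mapping.keys (F l x))"
proof -
  have "v \<in> Poly_Mapping.keys (if d then Poly_Mapping.single u (1::'k) else 0)
      \<or> v \<in> Poly_Mapping.keys (\<Sum>l\<in>L. linext (F l) (G l))"
    using subsetD[OF keys_diff assms] by blast
  moreover have "Poly_Mapping.keys (if d then Poly_Mapping.single u (1::'k) else 0) \<subseteq> {u}"
    by simp
  moreover have "Poly_Mapping.keys (\<Sum>l\<in>L. linext (F l) (G l))
      \<subseteq> (\<Union>l\<in>L. \<Union>x\<in>Poly_Mapping.keys (G l). Poly_Mapping.keys (F l x))"
    by (intro order.trans[OF keys_sum] UN_mono keys_linext order.refl)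
  ultimately show ?thesis by blast
qed

definition lin :: "(('a \<Rightarrow>\<^sub>0 'k::comm_ring_1) \<Rightarrow> ('b \<Rightarrow>\<^sub>0 'k)) \<Rightarrow> bool" where
  "lin f \<longleftrightarrow> (\<forall>p q. f (p + q) = f p + f q) \<and> (\<forall>c p. f (sc c p) = sc c (f p))"

lemma lin_add: "lin f \<Longrightarrow> f (p + q) = f p + f q"
  by (simp add: lin_def)

lemma lin_sc: "lin f \<Longrightarrow> f (sc c p) = sc c (f p)"
  by (simp add: lin_def)

lemma lin_zero: "lin f \<Longrightarrow> f 0 = 0"
  using lin_sc[of f 0 0] by simp

lemma lin_sum: "lin f \<Longrightarrow> f (sum g A) = (\<Sum>x\<in>A. f (g x))"
  by (induction A rule: infinite_finite_induct) (auto simp: lin_zero lin_add)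

lemma uminus_eq_sc: "- p = sc (-1) (p :: 'a \<Rightarrow>\<^sub>0 'k::comm_ring_1)"
  by (rule poly_mapping_eqI) (simp add: lookup_sc)

lemma lin_diff: "lin f \<Longrightarrow> f (p - q) = f p - f q"
  by (simp only: diff_conv_add_uminus uminus_eq_sc lin_add lin_sc)

lemma lin_single: "lin f \<Longrightarrow> f (Poly_Mapping.single w c) = sc c (f (Poly_Mapping.single w 1))"
  using lin_sc[of f c "Poly_Mapping.single w 1"] by (simp add: sc_single)

lemma lin_linext: "lin (linext g)"
  by (simp add: lin_def linext_add linext_sc)

lemma lin_id: "lin id" "lin (\<lambda>x. x)"
  by (simp_all add: lin_def)

lemma lin_sc_left: "lin (sc c)"
  by (simp add: lin_def sc_add sc_sc mult.commute)

lemma lin_comp: "lin f \<Longrightarrow> lin g \<Longrightarrow> lin (\<lambda>x. f (g x))"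
  by (simp add: lin_def)

lemma lin_sum_maps: "(\<And>l. l \<in> L \<Longrightarrow> lin (F l)) \<Longrightarrow> lin (\<lambda>x. \<Sum>l\<in>L. F l x)"
  by (simp add: lin_def sum.distrib sc_sum)

lemma lin_if_zero: "lin (\<lambda>x. if c then x else 0)"
  by (simp add: lin_def)

lemma lin_eq:
  assumes "lin f" "lin h" "\<And>w. f (Poly_Mapping.single w 1) = h (Poly_Mapping.single w 1)"
  shows "f p = h p"
proof (induction p rule: poly_mapping_induct)
  case (single w c) then show ?case using assms lin_single[of f w c] lin_single[of h w c] by simp
qed (use assms in \<open>simp_all add: lin_zero lin_add\<close>)

lemma lin_eq_on_keys:
  assumes "lin f" "lin h"
    "\<And>w. w \<in> Poly_Mapping.keys p \<Longrightarrow> f (Poly_Mapping.single w 1) = h (Poly_Mapping.single w 1)"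
  shows "f p = h p"
proof -
  have "f p = linext (\<lambda>w. f (Poly_Mapping.single w 1)) p"
    by (rule lin_eq[OF assms(1) lin_linext]) (simp add: linext_single)
  also have "\<dots> = linext (\<lambda>w. h (Poly_Mapping.single w 1)) p"
    by (rule linext_cong[OF refl assms(3)])
  also have "\<dots> = h p"
    by (rule lin_eq[OF lin_linext assms(2)]) (simp add: linext_single)
  finally show ?thesis .
qed

lemma bilin_eq:
  assumes "\<And>q. lin (\<lambda>p. F p q)" "\<And>p. lin (\<lambda>q. F p q)"
    "\<And>q. lin (\<lambda>p. G p q)" "\<And>p. lin (\<lambda>q. G p q)"
    "\<And>u w. F (Poly_Mapping.single u 1) (Poly_Mapping.single w 1) = G (Poly_Mapping.single u 1) (Poly_Mapping.single w 1)"
  shows "F p q = G p q"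
proof -
  have "F (Poly_Mapping.single u 1) q = G (Poly_Mapping.single u 1) q" for u
    by (rule lin_eq[where f="\<lambda>q. F (Poly_Mapping.single u 1) q"]) (simp_all add: assms)
  then show ?thesis
    by (rule lin_eq[where f="\<lambda>p. F p q" and h="\<lambda>p. G p q", OF assms(1) assms(3)])
qed

lemma lin_mult_left: "lin (\<lambda>p. p * (q :: 'a::monoid_add \<Rightarrow>\<^sub>0 'k::comm_ring_1))"
  by (simp add: lin_def distrib_right sc_mult_left)

lemma lin_mult_right: "lin (\<lambda>q. (p :: 'a::monoid_add \<Rightarrow>\<^sub>0 'k::comm_ring_1) * q)"
  by (simp add: lin_def distrib_left sc_mult_right)

lemma lin_mult:
  fixes f :: "('a::monoid_add \<Rightarrow>\<^sub>0 'k::comm_ring_1) \<Rightarrow> ('b::monoid_add \<Rightarrow>\<^sub>0 'k)"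
  assumes "lin f"
    "\<And>u w. f (Poly_Mapping.single (u + w) 1) = f (Poly_Mapping.single u 1) * f (Poly_Mapping.single w 1)"
  shows "f (p * q) = f p * f q"
  by (rule bilin_eq[where F="\<lambda>p q. f (p * q)" and G="\<lambda>p q. f p * f q"])
     (simp_all add: lin_comp[OF assms(1) lin_mult_left] lin_comp[OF assms(1) lin_mult_right]
        lin_comp[OF lin_mult_left assms(1)] lin_comp[OF lin_mult_right assms(1)] mult_single assms(2))

definition hom :: "(('a::monoid_add \<Rightarrow>\<^sub>0 'k::comm_ring_1) \<Rightarrow> ('b::monoid_add \<Rightarrow>\<^sub>0 'k)) \<Rightarrow> bool" where
  "hom f \<longleftrightarrow> lin f \<and> (\<forall>p q. f (p * q) = f p * f q) \<and> f 1 = 1"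

lemma hom_lin: "hom f \<Longrightarrow> lin f"
  and hom_mult: "hom f \<Longrightarrow> f (p * q) = f p * f q"
  and hom_one: "hom f \<Longrightarrow> f 1 = 1"
  by (simp_all add: hom_def)

lemma hom_comp: "hom f \<Longrightarrow> hom g \<Longrightarrow> hom (\<lambda>x. f (g x))"
  by (simp add: hom_def lin_comp)

lemma hom_id: "hom id" "hom (\<lambda>x. x)"
  by (simp_all add: hom_def lin_id)

lemma hom_linext:
  assumes "\<And>u w. g (u + w) = g u * g w" "g 0 = 1"
  shows "hom (linext g)"
proof -
  have "linext g (p * q) = linext g p * linext g q" for p q
    by (rule lin_mult) (simp_all add: lin_linext linext_single assms)
  moreover have "linext g 1 = 1"
    by (simp add: linext_single assms flip: single_one)
  ultimately show ?thesis by (simp add: hom_def lin_linext)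
qed

lemma hom_sum: "hom f \<Longrightarrow> f (sum g A) = (\<Sum>x\<in>A. f (g x))"
  by (simp add: hom_lin lin_sum)

lemma ideal_mult: "x \<in> ideal_of R \<Longrightarrow> a * x * b \<in> ideal_of R"
proof (induction x arbitrary: a b rule: ideal_of.induct)
  case zero then show ?case by (simp add: ideal_of.zero)
next
  case (gen r a' b') then show ?case
    using ideal_of.gen[of r R "a * a'" "b' * b"] by (simp add: mult.assoc)
next
  case (add x y) then show ?case by (simp add: distrib_left distrib_right ideal_of.add)
qed

lemma ideal_gen: "r \<in> R \<Longrightarrow> r \<in> ideal_of R"
  using ideal_of.gen[of r R 1 1] by simp

lemma ideal_left: "x \<in> ideal_of R \<Longrightarrow> a * x \<in> ideal_of R"
  using ideal_mult[of x R a 1] by simp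

lemma ideal_right: "x \<in> ideal_of R \<Longrightarrow> x * b \<in> ideal_of R"
  using ideal_mult[of x R 1 b] by simp

lemma ideal_uminus: "x \<in> ideal_of R \<Longrightarrow> - x \<in> ideal_of R"
  using ideal_left[of x R "- 1"] by simp

lemma ideal_sum: "(\<And>x. x \<in> A \<Longrightarrow> f x \<in> ideal_of R) \<Longrightarrow> sum f A \<in> ideal_of R"
  by (induction A rule: infinite_finite_induct) (auto intro: ideal_of.zero ideal_of.add)

lemma eqv_refl [simp]: "eqv R p p"
  by (simp add: eqv_def ideal_of.zero)

lemma eqv_trans [trans]: "eqv R p q \<Longrightarrow> eqv R q r \<Longrightarrow> eqv R p r"
  unfolding eqv_def using ideal_of.add by fastforce

lemma eqv_add: "eqv R p p' \<Longrightarrow> eqv R q q' \<Longrightarrow> eqv R (p + q) (p' + q')"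
proof -
  assume "eqv R p p'" "eqv R q q'"
  then have "(p - p') + (q - q') \<in> ideal_of R"
    unfolding eqv_def by (rule ideal_of.add)
  then show ?thesis by (simp add: eqv_def algebra_simps)
qed

lemma eqv_mult: "eqv R p p' \<Longrightarrow> eqv R q q' \<Longrightarrow> eqv R (p * q) (p' * q')"
proof -
  assume "eqv R p p'" "eqv R q q'"
  moreover have "p * q - p' * q' = (p - p') * q + p' * (q - q')" by (simp add: algebra_simps)
  ultimately show ?thesis unfolding eqv_def by (simp add: ideal_left ideal_right ideal_of.add)
qed

lemma eqv_sum: "(\<And>x. x \<in> A \<Longrightarrow> eqv R (f x) (g x)) \<Longrightarrow> eqv R (sum f A) (sum g A)"
  by (induction A rule: infinite_finite_induct) (auto intro: eqv_add)

lemma eqv_sc: "eqv R p p' \<Longrightarrow> eqv R (sc c p) (sc c p')"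
  by (simp add: sc_eq_single_zero_mult eqv_mult)

lemma eqv_gen: "p - q \<in> R \<Longrightarrow> eqv R p q"
  by (simp add: eqv_def ideal_gen)

lemma hom_ideal:
  assumes "hom f" "\<And>r. r \<in> R \<Longrightarrow> f r \<in> ideal_of R'" "x \<in> ideal_of R"
  shows "f x \<in> ideal_of R'"
  using assms(3)
proof (induction x rule: ideal_of.induct)
  case zero then show ?case using assms(1) by (simp add: hom_lin lin_zero ideal_of.zero)
next
  case (gen r a b) then show ?case using assms by (simp add: hom_mult ideal_mult)
next
  case (add x y) then show ?case using assms(1) by (simp add: hom_lin lin_add ideal_of.add)
qed

lemma alg_map_hom:
  assumes "hom f" "\<And>r. r \<in> R \<Longrightarrow> f r \<in> ideal_of R'"
  shows "alg_map R R' f"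
proof -
  have "eqv R' (f p) (f q)" if "eqv R p q" for p q
    using that hom_ideal[OF assms, where x="p - q"] assms(1) by (simp add: eqv_def hom_lin lin_diff)
  then show ?thesis using assms(1)
    by (simp add: alg_map_def lin_map_def hom_lin lin_add lin_sc hom_mult hom_one)
qed

lemma lin_eqv:
  assumes "lin f" "lin h" "\<And>w. eqv R (f (Poly_Mapping.single w 1)) (h (Poly_Mapping.single w 1))"
  shows "eqv R (f p) (h p)"
proof (induction p rule: poly_mapping_induct)
  case (single w c)
  have "eqv R (sc c (f (Poly_Mapping.single w 1))) (sc c (h (Poly_Mapping.single w 1)))"
    by (rule eqv_sc[OF assms(3)])
  then show ?case by (simp only: lin_single[OF assms(1), of w c] lin_single[OF assms(2), of w c])
next
  case zero then show ?case using assms by (simp add: lin_zero)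
next
  case (add p q) then show ?case using assms by (simp add: lin_add eqv_add)
qed

lemma mult_single_one: "Poly_Mapping.single u 1 * Poly_Mapping.single w 1 = Poly_Mapping.single (u + w) (1::'k::semiring_1)"
  by (simp add: mult_single)

lemma letters_plus [simp]: "letters (u + w) = letters u @ letters w"
  by (simp add: plus_word_def)

lemma letters_zero [simp]: "letters 0 = []"
  by (simp add: zero_word_def)

lemma hom_ext: "hom (ext g)"
  unfolding ext_def by (rule hom_linext) simp_all

lemma ext_X: "ext g (X i j a) = g (i, j, a)"
  by (simp add: ext_def X_def linext_single)

lemma single_Word_eq_prod_X:
  "Poly_Mapping.single (Word xs) 1 = prod_list (map (\<lambda>(i, j, a). X i j a :: gen word \<Rightarrow>\<^sub>0 'k::comm_ring_1) xs)"
proof (induction xs)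
  case Nil then show ?case by (simp add: zero_word_def flip: single_one)
next
  case (Cons x xs)
  have "Poly_Mapping.single (Word (x # xs)) (1::'k) = Poly_Mapping.single (Word [x]) 1 * Poly_Mapping.single (Word xs) 1"
    by (simp add: mult_single plus_word_def)
  with Cons show ?case by (cases x) (simp add: X_def)
qed

lemma free_algebra_induct [case_names one X mult sc add]:
  fixes P :: "(gen word \<Rightarrow>\<^sub>0 'k::comm_ring_1) \<Rightarrow> bool"
  assumes "P 1" "\<And>i j a. P (X i j a)" "\<And>x y. P x \<Longrightarrow> P y \<Longrightarrow> P (x * y)"
    "\<And>c x. P x \<Longrightarrow> P (sc c x)" "\<And>x y. P x \<Longrightarrow> P y \<Longrightarrow> P (x + y)"
  shows "P p"
proof (induction p rule: poly_mapping_induct)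
  case zero
  from assms(4)[OF assms(1), of 0] show ?case by simp
next
  case (single w c)
  obtain xs where w: "w = Word xs" by (cases w)
  have "P (prod_list (map (\<lambda>(i, j, a). X i j a :: gen word \<Rightarrow>\<^sub>0 'k) xs))"
    by (induction xs) (auto intro: assms(1-3))
  then have "P (sc c (Poly_Mapping.single w 1))"
    unfolding w single_Word_eq_prod_X by (rule assms(4))
  then show ?case by (simp add: sc_single)
qed (rule assms(5))

lemma hom_free_eqv_X:
  fixes f h :: "(gen word \<Rightarrow>\<^sub>0 'k::comm_ring_1) \<Rightarrow> ('b::monoid_add \<Rightarrow>\<^sub>0 'k)"
  assumes "hom f" "hom h" "\<And>i j a. eqv R (f (X i j a)) (h (X i j a))"
  shows "eqv R (f p) (h p)"
  using assms
  by (induction p rule: free_algebra_induct)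
     (simp_all add: hom_one hom_mult eqv_mult hom_lin lin_sc eqv_sc lin_add eqv_add)

lemma hom_free_eq_X:
  fixes f h :: "(gen word \<Rightarrow>\<^sub>0 'k::comm_ring_1) \<Rightarrow> ('b::monoid_add \<Rightarrow>\<^sub>0 'k)"
  assumes "hom f" "hom h" "\<And>i j a. f (X i j a) = h (X i j a)"
  shows "f p = h p"
  using assms
  by (induction p rule: free_algebra_induct) (simp_all add: hom_one hom_mult hom_lin lin_sc lin_add)

section \<open>Tensor products\<close>

lemma sum_keys_delta:
  "(\<Sum>w\<in>Poly_Mapping.keys p. Poly_Mapping.lookup p w * (if w = a then c else 0))
     = Poly_Mapping.lookup p a * (c :: 'k::comm_semiring_1)"
proof -
  have "(\<Sum>w\<in>Poly_Mapping.keys p. Poly_Mapping.lookup p w * (if w = a then c else 0))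
      = (\<Sum>w\<in>Poly_Mapping.keys p. if w = a then Poly_Mapping.lookup p w * c else 0)"
    by (rule sum.cong) auto
  then show ?thesis by (simp add: sum.delta in_keys_iff)
qed

lemma lookup_tens:
  "Poly_Mapping.lookup (tens p q) (a, b) = Poly_Mapping.lookup p a * Poly_Mapping.lookup (q :: 'b \<Rightarrow>\<^sub>0 'k::comm_semiring_1) b"
proof -
  have "Poly_Mapping.lookup (Poly_Mapping.single (w, w') (1::'k)) (a, b)
      = (if w = a then (if w' = b then 1 else 0) else 0)" for w w'
    by (simp add: lookup_single when_def)
  then have inner: "(\<Sum>w'\<in>Poly_Mapping.keys q. Poly_Mapping.lookup q w' * Poly_Mapping.lookup (Poly_Mapping.single (w, w') 1) (a, b))
      = (if w = a then Poly_Mapping.lookup q b else 0)" for w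
    by (cases "w = a") (simp_all add: sum_keys_delta)
  show ?thesis
    by (simp add: tens_def lookup_linext lookup_sc inner sum_keys_delta)
qed

lemma tens_eqI:
  "(\<And>a b. Poly_Mapping.lookup (x :: ('a \<times> 'b) \<Rightarrow>\<^sub>0 'k::zero) (a, b) = Poly_Mapping.lookup y (a, b)) \<Longrightarrow> x = y"
  by (rule poly_mapping_eqI) auto

lemma tens_add_left: "tens (p + p') (q :: 'b \<Rightarrow>\<^sub>0 'k::comm_ring_1) = tens p q + tens p' q"
  by (rule tens_eqI) (simp add: lookup_tens lookup_add distrib_right)

lemma tens_add_right: "tens (p :: 'a \<Rightarrow>\<^sub>0 'k::comm_ring_1) (q + q') = tens p q + tens p q'"
  by (rule tens_eqI) (simp add: lookup_tens lookup_add distrib_left)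

lemma tens_sc_left: "tens (sc c p) (q :: 'b \<Rightarrow>\<^sub>0 'k::comm_ring_1) = sc c (tens p q)"
  by (rule tens_eqI) (simp add: lookup_tens lookup_sc mult.assoc)

lemma tens_sc_right: "tens p (sc c q) = sc c (tens p (q :: 'b \<Rightarrow>\<^sub>0 'k::comm_ring_1))"
  by (rule tens_eqI) (simp add: lookup_tens lookup_sc mult.left_commute)

lemma tens_zero [simp]:
  "tens 0 (q :: 'b \<Rightarrow>\<^sub>0 'k::comm_ring_1) = 0" "tens (p :: 'a \<Rightarrow>\<^sub>0 'k::comm_ring_1) 0 = 0"
  by (rule tens_eqI, simp add: lookup_tens)+

lemma tens_single:
  "tens (Poly_Mapping.single u (c::'k::comm_ring_1)) (Poly_Mapping.single w d) = Poly_Mapping.single (u, w) (c * d)"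
  by (rule tens_eqI) (simp add: lookup_tens lookup_single when_def)

lemma tens_diff_left: "tens (p - p') q = tens p q - tens p' (q :: 'b \<Rightarrow>\<^sub>0 'k::comm_ring_1)"
  by (rule tens_eqI) (simp add: lookup_tens lookup_minus left_diff_distrib)

lemma tens_diff_right: "tens p (q - q') = tens p q - tens p (q' :: 'b \<Rightarrow>\<^sub>0 'k::comm_ring_1)"
  by (rule tens_eqI) (simp add: lookup_tens lookup_minus right_diff_distrib)

lemma tens_sum_left: "tens (sum f A) (q :: 'b \<Rightarrow>\<^sub>0 'k::comm_ring_1) = (\<Sum>x\<in>A. tens (f x) q)"
  by (induction A rule: infinite_finite_induct) (simp_all add: tens_add_left)

lemma tens_sum_right: "tens (p :: 'a \<Rightarrow>\<^sub>0 'k::comm_ring_1) (sum f A) = (\<Sum>x\<in>A. tens p (f x))"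
  by (induction A rule: infinite_finite_induct) (simp_all add: tens_add_right)

lemma lin_tens_left: "lin (\<lambda>p. tens p (q :: 'b \<Rightarrow>\<^sub>0 'k::comm_ring_1))"
  by (simp add: lin_def tens_add_left tens_sc_left)

lemma lin_tens_right: "lin (\<lambda>q. tens (p :: 'a \<Rightarrow>\<^sub>0 'k::comm_ring_1) q)"
  by (simp add: lin_def tens_add_right tens_sc_right)

lemma tens_one: "tens 1 1 = (1 :: ('a::monoid_add \<times> 'b::monoid_add) \<Rightarrow>\<^sub>0 'k::comm_ring_1)"
  by (simp add: tens_single flip: single_one zero_prod_def)

lemma tens_mult: "tens p q * tens p' q' = tens (p * p') (q * (q' :: 'b::monoid_add \<Rightarrow>\<^sub>0 'k::comm_ring_1))"
proof -
  have single_pair_mult: "Poly_Mapping.single (u, w) c * Poly_Mapping.single (u', w') d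
      = Poly_Mapping.single (u + u', w + w') (c * d)" for u w u' w' and c d :: 'k
    by (simp add: mult_single plus_prod_def)
  have base: "tens (Poly_Mapping.single u 1) (Poly_Mapping.single w 1) * tens p' q'
      = tens (Poly_Mapping.single u 1 * p') (Poly_Mapping.single w 1 * q')" for u w
    by (rule bilin_eq[where F="\<lambda>p' q'. tens (Poly_Mapping.single u 1) (Poly_Mapping.single w 1) * tens p' q'"
          and G="\<lambda>p' q'. tens (Poly_Mapping.single u 1 * p') (Poly_Mapping.single w 1 * q')"])
       (simp_all add: lin_comp[OF lin_mult_right lin_tens_left] lin_comp[OF lin_mult_right lin_tens_right]
          lin_comp[OF lin_tens_left lin_mult_right] lin_comp[OF lin_tens_right lin_mult_right]
          tens_single single_pair_mult mult_single)
  show ?thesis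
    by (rule bilin_eq[where F="\<lambda>p q. tens p q * tens p' q'" and G="\<lambda>p q. tens (p * p') (q * q')"])
       (simp_all add: lin_comp[OF lin_mult_left lin_tens_left] lin_comp[OF lin_mult_left lin_tens_right]
          lin_comp[OF lin_tens_left lin_mult_left] lin_comp[OF lin_tens_right lin_mult_left] base)
qed

lemma tmap_single: "tmap f g (Poly_Mapping.single (u, w) c)
   = sc c (tens (f (Poly_Mapping.single u 1)) (g (Poly_Mapping.single w 1)))"
  by (simp add: tmap_def linext_single)

lemma lin_tmap: "lin (tmap f g)"
  by (simp add: tmap_def lin_linext)

lemma tmap_tens:
  fixes f :: "('a::monoid_add \<Rightarrow>\<^sub>0 'k::comm_ring_1) \<Rightarrow> ('c::monoid_add \<Rightarrow>\<^sub>0 'k)"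
    and g :: "('b::monoid_add \<Rightarrow>\<^sub>0 'k) \<Rightarrow> ('d::monoid_add \<Rightarrow>\<^sub>0 'k)"
  assumes "lin f" "lin g"
  shows "tmap f g (tens p q) = tens (f p) (g q)"
  by (rule bilin_eq[where F="\<lambda>p q. tmap f g (tens p q)" and G="\<lambda>p q. tens (f p) (g q)"])
     (simp_all add: lin_comp[OF lin_tmap lin_tens_left] lin_comp[OF lin_tmap lin_tens_right]
        lin_comp[OF lin_tens_left assms(1)] lin_comp[OF lin_tens_right assms(2)]
        tens_single tmap_single)

lemma hom_tmap:
  fixes f :: "('a::monoid_add \<Rightarrow>\<^sub>0 'k::comm_ring_1) \<Rightarrow> ('c::monoid_add \<Rightarrow>\<^sub>0 'k)"
    and g :: "('b::monoid_add \<Rightarrow>\<^sub>0 'k) \<Rightarrow> ('d::monoid_add \<Rightarrow>\<^sub>0 'k)"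
  assumes "hom f" "hom g"
  shows "hom (tmap f g)"
proof -
  have "tmap f g (Poly_Mapping.single (x + y) 1)
      = tmap f g (Poly_Mapping.single x 1) * tmap f g (Poly_Mapping.single y 1)" for x y :: "'a \<times> 'b"
    using assms by (cases x, cases y) (simp add: tmap_single hom_mult tens_mult flip: mult_single_one)
  moreover have "tmap f g 1 = 1"
    using assms by (simp add: tmap_tens hom_lin hom_one tens_one flip: tens_one)
  ultimately show ?thesis
    by (simp add: hom_def lin_tmap lin_mult[OF lin_tmap])
qed

lemma lin_assocr: "lin assocr"
  by (simp add: assocr_def lin_linext)

lemma hom_assocr: "hom (assocr :: (('a::monoid_add \<times> 'b::monoid_add) \<times> 'c::monoid_add \<Rightarrow>\<^sub>0 'k::comm_ring_1) \<Rightarrow> _)"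
  unfolding assocr_def
  by (rule hom_linext) (auto simp: split_beta mult_single zero_prod_def simp flip: single_one)


lemma lookup_assocr:
  "Poly_Mapping.lookup (assocr x) (a, b, c) = Poly_Mapping.lookup (x :: ('a \<times> 'b) \<times> 'c \<Rightarrow>\<^sub>0 'k::comm_ring_1) ((a, b), c)"
proof -
  have "Poly_Mapping.lookup ((\<lambda>((a, b), c). Poly_Mapping.single (a, b, c) 1) w) (a, b, c)
      = (if w = ((a, b), c) then 1 else (0::'k))" for w :: "('a \<times> 'b) \<times> 'c"
  proof -
    obtain a' b' c' where "w = ((a', b'), c')" by (cases w) auto
    then show ?thesis by (simp add: lookup_single when_def)
  qed
  then show ?thesis by (simp add: assocr_def lookup_linext sum_keys_delta)
qed

lemma assocr_tens: "assocr (tens (tens a b) c) = tens a (tens b (c :: 'c \<Rightarrow>\<^sub>0 'k::comm_ring_1))"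
proof (rule poly_mapping_eqI)
  fix z :: "'a \<times> 'b \<times> 'c"
  show "Poly_Mapping.lookup (assocr (tens (tens a b) c)) z = Poly_Mapping.lookup (tens a (tens b c)) z"
    by (cases z) (simp add: lookup_assocr lookup_tens mult.assoc)
qed

lemma lin_mulmap: "lin mulmap"
  by (simp add: mulmap_def lin_linext)

lemma mulmap_single: "mulmap (Poly_Mapping.single (u, w) c) = sc c (Poly_Mapping.single (u + w) 1)"
  by (simp add: mulmap_def linext_single)

lemma mulmap_tens: "mulmap (tens p q) = p * (q :: 'a::monoid_add \<Rightarrow>\<^sub>0 'k::comm_ring_1)"
  by (rule bilin_eq[where F="\<lambda>p q. mulmap (tens p q)" and G="\<lambda>p q. p * q"])
     (simp_all add: lin_comp[OF lin_mulmap lin_tens_left] lin_comp[OF lin_mulmap lin_tens_right]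
        lin_mult_left lin_mult_right tens_single mulmap_single mult_single)

definition lin_functional :: "(('a \<Rightarrow>\<^sub>0 'k::comm_ring_1) \<Rightarrow> 'k) \<Rightarrow> bool" where
  "lin_functional e \<longleftrightarrow> (\<forall>p q. e (p + q) = e p + e q) \<and> (\<forall>c p. e (sc c p) = c * e p)"

lemma lcounit_single:
  "lcounit e (Poly_Mapping.single (u, w) c) = sc c (sc (e (Poly_Mapping.single u 1)) (Poly_Mapping.single w 1))"
  by (simp add: lcounit_def linext_single)

lemma lin_lcounit: "lin (lcounit e)"
  by (simp add: lcounit_def lin_linext)

lemma lcounit_tens:
  assumes "lin_functional e"
  shows "lcounit e (tens p q) = sc (e p) (q :: 'b::monoid_add \<Rightarrow>\<^sub>0 'k::comm_ring_1)"
proof -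
  have l: "lin (\<lambda>p. sc (e p) q)" for q
    using assms by (simp add: lin_def lin_functional_def sc_add_left sc_sc)
  have l2: "lin (\<lambda>q. sc (e p) q)" for p
    by (simp add: lin_def sc_add sc_sc mult.commute)
  show ?thesis
    by (rule bilin_eq[where F="\<lambda>p q. lcounit e (tens p q)" and G="\<lambda>p q. sc (e p) q"])
       (simp_all add: lin_comp[OF lin_lcounit lin_tens_left] lin_comp[OF lin_lcounit lin_tens_right]
          l l2 tens_single lcounit_single)
qed

lemma rcounit_single:
  "rcounit e (Poly_Mapping.single (u, w) c) = sc c (sc (e (Poly_Mapping.single w 1)) (Poly_Mapping.single u 1))"
  by (simp add: rcounit_def linext_single)

lemma lin_rcounit: "lin (rcounit e)"
  by (simp add: rcounit_def lin_linext)

lemma rcounit_tens: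
  assumes "lin_functional e"
  shows "rcounit e (tens p q) = sc (e q) (p :: 'a::monoid_add \<Rightarrow>\<^sub>0 'k::comm_ring_1)"
proof -
  have l: "lin (\<lambda>q. sc (e q) p)" for p
    using assms by (simp add: lin_def lin_functional_def sc_add_left sc_sc)
  have l2: "lin (\<lambda>p. sc (e q) p)" for q
    by (simp add: lin_def sc_add sc_sc mult.commute)
  show ?thesis
    by (rule bilin_eq[where F="\<lambda>p q. rcounit e (tens p q)" and G="\<lambda>p q. sc (e q) p"])
       (simp_all add: lin_comp[OF lin_rcounit lin_tens_left] lin_comp[OF lin_rcounit lin_tens_right]
          l l2 tens_single rcounit_single)
qed

lemma hom_lcounit:
  fixes e :: "('a::monoid_add \<Rightarrow>\<^sub>0 'k::comm_ring_1) \<Rightarrow> 'k"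
  assumes "\<And>u w. e (Poly_Mapping.single (u + w) 1) = e (Poly_Mapping.single u 1) * e (Poly_Mapping.single w 1)"
    "e 1 = 1"
  shows "hom (lcounit e :: ('a \<times> 'b::monoid_add \<Rightarrow>\<^sub>0 'k) \<Rightarrow> _)"
proof -
  have "lcounit e (Poly_Mapping.single (x + y) 1)
      = lcounit e (Poly_Mapping.single x 1) * lcounit e (Poly_Mapping.single y 1)" for x y :: "'a \<times> 'b"
    by (cases x, cases y) (simp add: lcounit_def linext_single sc_single mult_single assms(1))
  moreover have "lcounit e (1 :: 'a \<times> 'b \<Rightarrow>\<^sub>0 'k) = 1"
    using assms(2) by (simp add: lcounit_def linext_single sc_single zero_prod_def flip: single_one)
  ultimately show ?thesis
    by (simp add: hom_def lcounit_def lin_linext lin_mult[OF lin_linext, folded lcounit_def])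
qed

lemma hom_rcounit:
  fixes e :: "('b::monoid_add \<Rightarrow>\<^sub>0 'k::comm_ring_1) \<Rightarrow> 'k"
  assumes "\<And>u w. e (Poly_Mapping.single (u + w) 1) = e (Poly_Mapping.single u 1) * e (Poly_Mapping.single w 1)"
    "e 1 = 1"
  shows "hom (rcounit e :: ('a::monoid_add \<times> 'b \<Rightarrow>\<^sub>0 'k) \<Rightarrow> _)"
proof -
  have "rcounit e (Poly_Mapping.single (x + y) 1)
      = rcounit e (Poly_Mapping.single x 1) * rcounit e (Poly_Mapping.single y 1)" for x y :: "'a \<times> 'b"
    by (cases x, cases y) (simp add: rcounit_def linext_single sc_single mult_single assms(1))
  moreover have "rcounit e (1 :: 'a \<times> 'b \<Rightarrow>\<^sub>0 'k) = 1"
    using assms(2) by (simp add: rcounit_def linext_single sc_single zero_prod_def flip: single_one)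
  ultimately show ?thesis
    by (simp add: hom_def rcounit_def lin_linext lin_mult[OF lin_linext, folded rcounit_def])
qed

lemma tens_ideal_left:
  fixes p :: "'a::monoid_add \<Rightarrow>\<^sub>0 'k::comm_ring_1" and q :: "'b::monoid_add \<Rightarrow>\<^sub>0 'k"
  assumes "p \<in> ideal_of R"
  shows "tens p q \<in> ideal_of (trel R R')"
  using assms
proof (induction p rule: ideal_of.induct)
  case (gen r a b)
  have "tens r 1 \<in> trel R R'" using gen by (simp add: trel_def)
  then have "tens a 1 * tens r 1 * tens b q \<in> ideal_of (trel R R')" by (rule ideal_of.gen)
  then show ?case by (simp add: tens_mult)
qed (simp_all add: ideal_of.zero tens_add_left ideal_of.add)

lemma tens_ideal_right:
  fixes p :: "'a::monoid_add \<Rightarrow>\<^sub>0 'k::comm_ring_1" and q :: "'b::monoid_add \<Rightarrow>\<^sub>0 'k"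
  assumes "q \<in> ideal_of R'"
  shows "tens p q \<in> ideal_of (trel R R')"
  using assms
proof (induction q rule: ideal_of.induct)
  case (gen r a b)
  have "tens 1 r \<in> trel R R'" using gen by (simp add: trel_def)
  then have "tens p a * tens 1 r * tens 1 b \<in> ideal_of (trel R R')" by (rule ideal_of.gen)
  then show ?case by (simp add: tens_mult)
qed (simp_all add: ideal_of.zero tens_add_right ideal_of.add)

lemma eqv_tens_left:
  "eqv R p p' \<Longrightarrow> eqv (trel R R') (tens p q) (tens p' (q :: 'b::monoid_add \<Rightarrow>\<^sub>0 'k::comm_ring_1))"
  unfolding eqv_def using tens_ideal_left[of "p - p'" R q R'] by (simp add: tens_diff_left)

lemma eqv_tens_right:
  "eqv R' q q' \<Longrightarrow> eqv (trel R R') (tens (p :: 'a::monoid_add \<Rightarrow>\<^sub>0 'k::comm_ring_1) q) (tens p q')"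
  unfolding eqv_def using tens_ideal_right[of "q - q'" R' p R] by (simp add: tens_diff_right)

section \<open>The comultiplication and the counit\<close>

lemma X_out_of_range_mem_hrels: "\<not> (i \<in> {1..p} \<and> j \<in> {1..q}) \<Longrightarrow> X i j a \<in> hrels p q"
  unfolding hrels_def by (intro UnI1) blast

lemma X_out_of_range_mem_ideal: "\<not> (i \<in> {1..p} \<and> j \<in> {1..q}) \<Longrightarrow> X i j a \<in> ideal_of (hrels p q)"
  by (rule ideal_gen[OF X_out_of_range_mem_hrels])

lemma row_rel_mem_hrels: "i \<in> {1..p} \<Longrightarrow> i' \<in> {1..p} \<Longrightarrow>
   (\<Sum>l\<in>{1..q}. X i l a * X i' l (Suc a)) - (if i = i' then 1 else 0) \<in> hrels p q"
  unfolding hrels_def by (intro UnI1 UnI2) blast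

lemma col_rel_mem_hrels: "j \<in> {1..q} \<Longrightarrow> j' \<in> {1..q} \<Longrightarrow>
   (\<Sum>l\<in>{1..p}. X l j (Suc a) * X l j' a) - (if j = j' then 1 else 0) \<in> hrels p q"
  unfolding hrels_def by (intro UnI2) blast

lemma hrels_cases [consumes 1, case_names out_of_range row col]:
  assumes "r \<in> hrels p q"
  obtains (out_of_range) i j a where "r = X i j a" "\<not> (i \<in> {1..p} \<and> j \<in> {1..q})"
    | (row) i i' a where "r = (\<Sum>l\<in>{1..q}. X i l a * X i' l (Suc a)) - (if i = i' then 1 else 0)"
        "i \<in> {1..p}" "i' \<in> {1..p}"
    | (col) j j' a where "r = (\<Sum>l\<in>{1..p}. X l j (Suc a) * X l j' a) - (if j = j' then 1 else 0)"
        "j \<in> {1..q}" "j' \<in> {1..q}"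
  using assms unfolding hrels_def by blast

lemma comult_X: "ext (gcop K) (X i j a) = (\<Sum>k\<in>{1..K}. tens (X i k a) (X k j a))"
  by (simp add: ext_X gcop_def)

lemma lin_comult: "lin (ext (gcop K))"
  by (rule hom_lin[OF hom_ext])

lemma comult_coassoc:
  "assocr (tmap (ext (gcop K1)) id (ext (gcop K2) p))
     = tmap id (ext (gcop K2)) (ext (gcop K1) (p :: gen word \<Rightarrow>\<^sub>0 'k::field))"
proof (rule hom_free_eq_X)
  show "hom (\<lambda>p. assocr (tmap (ext (gcop K1)) id (ext (gcop K2) p)))"
    by (intro hom_comp[OF hom_assocr] hom_comp[OF hom_tmap] hom_ext hom_id)
  show "hom (\<lambda>p. tmap id (ext (gcop K2)) (ext (gcop K1) p))"
    by (intro hom_comp[OF hom_tmap] hom_ext hom_id)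
  fix i j a
  have "assocr (tmap (ext (gcop K1)) id (ext (gcop K2) (X i j a)))
      = (\<Sum>k\<in>{1..K2}. \<Sum>k'\<in>{1..K1}. tens (X i k' a) (tens (X k' k a) (X k j a :: gen word \<Rightarrow>\<^sub>0 'k)))"
    by (simp add: comult_X lin_sum[OF lin_tmap] tmap_tens[OF lin_comult lin_id(1)] tens_sum_left
        lin_sum[OF lin_assocr] assocr_tens)
  also have "\<dots> = (\<Sum>k'\<in>{1..K1}. \<Sum>k\<in>{1..K2}. tens (X i k' a) (tens (X k' k a) (X k j a)))"
    by (rule sum.swap)
  also have "\<dots> = tmap id (ext (gcop K2)) (ext (gcop K1) (X i j a))"
    by (simp add: comult_X lin_sum[OF lin_tmap] tmap_tens[OF lin_id(1) lin_comult] tens_sum_right)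
  finally show "assocr (tmap (ext (gcop K1)) id (ext (gcop K2) (X i j a)))
      = tmap id (ext (gcop K2)) (ext (gcop K1) (X i j a :: gen word \<Rightarrow>\<^sub>0 'k))" .
qed

lemma comult_X_out_of_range:
  assumes "\<not> (i \<in> {1..p} \<and> j \<in> {1..q})"
  shows "ext (gcop K) (X i j a) \<in> ideal_of (trel (hrels p K) (hrels K (q :: nat)) :: (_ \<Rightarrow>\<^sub>0 'k::field) set)"
  unfolding comult_X
proof (rule ideal_sum)
  fix k
  show "tens (X i k a) (X k j a) \<in> ideal_of (trel (hrels p K) (hrels K q) :: (_ \<Rightarrow>\<^sub>0 'k) set)"
  proof (cases "i \<in> {1..p}")
    case True
    with assms show ?thesis by (intro tens_ideal_right X_out_of_range_mem_ideal) blast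
  qed (intro tens_ideal_left X_out_of_range_mem_ideal; blast)
qed

lemma comult_row_sum:
  "ext (gcop K) (\<Sum>l\<in>L. X i l a * X i' l b) = (\<Sum>k\<in>{1..K}. \<Sum>k'\<in>{1..K}.
     tens (X i k a * X i' k' b) (\<Sum>l\<in>L. X k l a * X k' l b :: gen word \<Rightarrow>\<^sub>0 'k::field))"
proof -
  have "ext (gcop K) (\<Sum>l\<in>L. X i l a * X i' l b)
      = (\<Sum>l\<in>L. \<Sum>k\<in>{1..K}. \<Sum>k'\<in>{1..K}. tens (X i k a * X i' k' b) (X k l a * X k' l b :: gen word \<Rightarrow>\<^sub>0 'k))"
    by (simp add: hom_sum[OF hom_ext] hom_mult[OF hom_ext] comult_X sum_product tens_mult)
  also have "\<dots> = (\<Sum>k\<in>{1..K}. \<Sum>k'\<in>{1..K}. tens (X i k a * X i' k' b) (\<Sum>l\<in>L. X k l a * X k' l b))"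
    unfolding tens_sum_right by (rule sum_swap3)
  finally show ?thesis .
qed

lemma comult_col_sum:
  "ext (gcop K) (\<Sum>l\<in>L. X l j b * X l j' a) = (\<Sum>k\<in>{1..K}. \<Sum>k'\<in>{1..K}.
     tens (\<Sum>l\<in>L. X l k b * X l k' a) (X k j b * X k' j' a :: gen word \<Rightarrow>\<^sub>0 'k::field))"
proof -
  have "ext (gcop K) (\<Sum>l\<in>L. X l j b * X l j' a)
      = (\<Sum>l\<in>L. \<Sum>k\<in>{1..K}. \<Sum>k'\<in>{1..K}. tens (X l k b * X l k' a) (X k j b * X k' j' a :: gen word \<Rightarrow>\<^sub>0 'k))"
    by (simp add: hom_sum[OF hom_ext] hom_mult[OF hom_ext] comult_X sum_product tens_mult)
  also have "\<dots> = (\<Sum>k\<in>{1..K}. \<Sum>k'\<in>{1..K}. tens (\<Sum>l\<in>L. X l k b * X l k' a) (X k j b * X k' j' a))"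
    unfolding tens_sum_left by (rule sum_swap3)
  finally show ?thesis .
qed

text \<open>The relation is applied twice: first in the tensor factor carrying the summation index l,
  then in the other one.\<close>

lemma comult_row_rel:
  assumes "i \<in> {1..p}" "i' \<in> {1..p}"
  shows "ext (gcop K) ((\<Sum>l\<in>{1..q}. X i l a * X i' l (Suc a)) - (if i = i' then 1 else 0))
    \<in> ideal_of (trel (hrels p K) (hrels K q) :: (_ \<Rightarrow>\<^sub>0 'k::field) set)"
proof -
  let ?T = "trel (hrels p K) (hrels K q) :: (_ \<Rightarrow>\<^sub>0 'k) set"
  have "eqv ?T (ext (gcop K) (\<Sum>l\<in>{1..q}. X i l a * X i' l (Suc a)))
      (\<Sum>k\<in>{1..K}. \<Sum>k'\<in>{1..K}. tens (X i k a * X i' k' (Suc a)) (if k = k' then 1 else 0))"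
    unfolding comult_row_sum by (intro eqv_sum eqv_tens_right eqv_gen row_rel_mem_hrels) auto
  also have "\<dots> = tens (\<Sum>k\<in>{1..K}. X i k a * X i' k (Suc a)) 1"
    by (simp add: tens_sum_left if_distrib[of "tens _"] sum.delta cong: if_cong)
  also have "eqv ?T \<dots> (tens (if i = i' then 1 else 0) 1)"
    by (intro eqv_tens_left eqv_gen row_rel_mem_hrels assms)
  also have "\<dots> = ext (gcop K) (if i = i' then 1 else 0)"
    by (simp add: hom_one[OF hom_ext] lin_zero[OF lin_comult] tens_one)
  finally show ?thesis
    by (simp add: eqv_def lin_diff[OF lin_comult])
qed

lemma comult_col_rel:
  assumes "j \<in> {1..q}" "j' \<in> {1..q}"
  shows "ext (gcop K) ((\<Sum>l\<in>{1..p}. X l j (Suc a) * X l j' a) - (if j = j' then 1 else 0))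
    \<in> ideal_of (trel (hrels p K) (hrels K q) :: (_ \<Rightarrow>\<^sub>0 'k::field) set)"
proof -
  let ?T = "trel (hrels p K) (hrels K q) :: (_ \<Rightarrow>\<^sub>0 'k) set"
  have "eqv ?T (ext (gcop K) (\<Sum>l\<in>{1..p}. X l j (Suc a) * X l j' a))
      (\<Sum>k\<in>{1..K}. \<Sum>k'\<in>{1..K}. tens (if k = k' then 1 else 0) (X k j (Suc a) * X k' j' a))"
    unfolding comult_col_sum by (intro eqv_sum eqv_tens_left eqv_gen col_rel_mem_hrels) auto
  also have "\<dots> = tens 1 (\<Sum>k\<in>{1..K}. X k j (Suc a) * X k j' a)"
    by (simp add: tens_sum_right if_distrib[of "\<lambda>x. tens x _"] sum.delta cong: if_cong)
  also have "eqv ?T \<dots> (tens 1 (if j = j' then 1 else 0))"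
    by (intro eqv_tens_right eqv_gen col_rel_mem_hrels assms)
  also have "\<dots> = ext (gcop K) (if j = j' then 1 else 0)"
    by (simp add: hom_one[OF hom_ext] lin_zero[OF lin_comult] tens_one)
  finally show ?thesis
    by (simp add: eqv_def lin_diff[OF lin_comult])
qed

lemma alg_map_comult:
  "alg_map (hrels p q) (trel (hrels p K) (hrels K q)) (ext (gcop K) :: (gen word \<Rightarrow>\<^sub>0 'k::field) \<Rightarrow> _)"
proof (rule alg_map_hom[OF hom_ext])
  fix r :: "gen word \<Rightarrow>\<^sub>0 'k"
  assume "r \<in> hrels p q"
  then show "ext (gcop K) r \<in> ideal_of (trel (hrels p K) (hrels K q))"
  proof (cases rule: hrels_cases)
    case (out_of_range i j a)
    then show ?thesis using comult_X_out_of_range by simp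
  next
    case row
    then show ?thesis by (simp only: comult_row_rel)
  next
    case col
    then show ?thesis by (simp only: comult_col_rel)
  qed
qed

text \<open>Identifying the scalars with the constants of the free algebra, the counit becomes the
  algebra map \<open>ext (counit_letter K)\<close>; this is how its multiplicativity is obtained.\<close>

definition counit_letter :: "nat \<Rightarrow> gen \<Rightarrow> (gen word \<Rightarrow>\<^sub>0 'k::field)" where
  "counit_letter K = (\<lambda>(i, j, a). Poly_Mapping.single 0 (if i = j \<and> i \<in> {1..K} then 1 else 0))"

lemma ext_counit_letter:
  fixes p :: "gen word \<Rightarrow>\<^sub>0 'k::field"
  shows "ext (counit_letter K) p = Poly_Mapping.single 0 (heps K p)"
proof -
  define \<delta> :: "gen \<Rightarrow> 'k" where "\<delta> = (\<lambda>(i, j, a). if i = j \<and> i \<in> {1..K} then 1 else 0)"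
  have "counit_letter K = (\<lambda>x. Poly_Mapping.single 0 (\<delta> x))"
    by (auto simp: counit_letter_def \<delta>_def)
  then have "ext (counit_letter K) = linext (\<lambda>w. Poly_Mapping.single 0 (prod_list (map \<delta> (letters w))))"
    by (simp add: ext_def prod_list_single_zero)
  then show ?thesis
    by (simp add: linext_def heps_def sc_single sum_single \<delta>_def)
qed

lemma heps_eq_lookup_ext_counit_letter: "heps K p = Poly_Mapping.lookup (ext (counit_letter K) p) 0"
  by (simp add: ext_counit_letter)

lemma heps_add: "heps K (p + q) = heps K p + heps K q"
  by (simp add: heps_eq_lookup_ext_counit_letter lin_add[OF hom_lin[OF hom_ext]] lookup_add)

lemma heps_sc: "heps K (sc c p) = c * heps K p"
  by (simp add: heps_eq_lookup_ext_counit_letter lin_sc[OF hom_lin[OF hom_ext]] lookup_sc)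

lemma heps_mult: "heps K (p * q) = heps K p * heps K q"
  using arg_cong[OF hom_mult[OF hom_ext, of "counit_letter K" p q], of "\<lambda>x. Poly_Mapping.lookup x 0"]
  by (simp add: ext_counit_letter mult_single)

lemma heps_one: "heps K 1 = 1"
  by (simp add: heps_eq_lookup_ext_counit_letter hom_one[OF hom_ext])

lemma heps_zero: "heps K 0 = 0"
  using heps_sc[of K 0 0] by simp

lemma heps_diff: "heps K (p - q) = heps K p - heps K q"
  using heps_add[of K "p - q" q] by simp

lemma heps_sum: "heps K (sum f A) = (\<Sum>x\<in>A. heps K (f x))"
  by (induction A rule: infinite_finite_induct) (simp_all add: heps_zero heps_add)

lemma heps_X: "heps K (X i j a) = (if i = j \<and> i \<in> {1..K} then 1 else 0)"
  by (simp add: heps_def X_def)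

lemma lin_functional_heps: "lin_functional (heps K)"
  by (simp add: lin_functional_def heps_add heps_sc)

lemma heps_rel:
  assumes "r \<in> hrels K K"
  shows "heps K r = (0::'k::field)"
  using assms
proof (cases rule: hrels_cases)
  case (row i i' a)
  then show ?thesis
    by (simp add: heps_diff heps_sum heps_mult heps_X heps_one heps_zero if_distrib[of "(*) _"] sum.delta
        cong: if_cong)
next
  case (col j j' a)
  then show ?thesis
    by (simp add: heps_diff heps_sum heps_mult heps_X heps_one heps_zero if_distrib[of "(*) _"] sum.delta
        cong: if_cong)
qed (auto simp: heps_X)

lemma heps_ideal: "x \<in> ideal_of (hrels K K) \<Longrightarrow> heps K x = (0::'k::field)"
  by (induction x rule: ideal_of.induct) (simp_all add: heps_zero heps_mult heps_rel heps_add)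

lemma char_map_heps: "char_map (hrels K K) (heps K :: (gen word \<Rightarrow>\<^sub>0 'k::field) \<Rightarrow> 'k)"
proof -
  have "heps K p = heps K q" if "eqv (hrels K K) p q" for p q :: "gen word \<Rightarrow>\<^sub>0 'k"
    using heps_ideal[of "p - q" K] that by (simp add: eqv_def heps_diff)
  then show ?thesis
    unfolding char_map_def by (simp add: heps_add heps_sc heps_mult heps_one)
qed

lemma lcounit_comult: "eqv (hrels K q) (lcounit (heps K) (ext (gcop K) p)) (p :: gen word \<Rightarrow>\<^sub>0 'k::field)"
proof (rule hom_free_eqv_X)
  show "hom (\<lambda>p. lcounit (heps K) (ext (gcop K) p) :: gen word \<Rightarrow>\<^sub>0 'k)"
    by (intro hom_comp[OF hom_lcounit] hom_ext) (simp_all add: heps_mult heps_one flip: mult_single_one)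
  fix i j a
  have "lcounit (heps K) (ext (gcop K) (X i j a)) = (if i \<in> {1..K} then X i j a else (0 :: gen word \<Rightarrow>\<^sub>0 'k))"
    by (simp add: comult_X lin_sum[OF lin_lcounit] lcounit_tens[OF lin_functional_heps] heps_X
        if_distrib[of "\<lambda>c. sc c _"] sum.delta cong: if_cong del: atLeastAtMost_iff)
  also have "eqv (hrels K q) \<dots> (X i j a)"
  proof (cases "i \<in> {1..K}")
    case False
    then have "- X i j a \<in> ideal_of (hrels K q)"
      by (intro ideal_uminus X_out_of_range_mem_ideal) blast
    with False show ?thesis by (simp add: eqv_def ideal_of.zero)
  qed simp
  finally show "eqv (hrels K q) (lcounit (heps K) (ext (gcop K) (X i j a))) (X i j a :: gen word \<Rightarrow>\<^sub>0 'k)" .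
qed (rule hom_id)

lemma rcounit_comult: "eqv (hrels q K) (rcounit (heps K) (ext (gcop K) p)) (p :: gen word \<Rightarrow>\<^sub>0 'k::field)"
proof (rule hom_free_eqv_X)
  show "hom (\<lambda>p. rcounit (heps K) (ext (gcop K) p) :: gen word \<Rightarrow>\<^sub>0 'k)"
    by (intro hom_comp[OF hom_rcounit] hom_ext) (simp_all add: heps_mult heps_one flip: mult_single_one)
  fix i j a
  have "rcounit (heps K) (ext (gcop K) (X i j a)) = (if j \<in> {1..K} then X i j a else (0 :: gen word \<Rightarrow>\<^sub>0 'k))"
    by (simp add: comult_X lin_sum[OF lin_rcounit] rcounit_tens[OF lin_functional_heps] heps_X
        if_distrib[of "\<lambda>c. sc c _"] sum.delta' cong: if_cong del: atLeastAtMost_iff)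
  also have "eqv (hrels q K) \<dots> (X i j a)"
  proof (cases "j \<in> {1..K}")
    case False
    then have "- X i j a \<in> ideal_of (hrels q K)"
      by (intro ideal_uminus X_out_of_range_mem_ideal) blast
    with False show ?thesis by (simp add: eqv_def ideal_of.zero)
  qed simp
  finally show "eqv (hrels q K) (rcounit (heps K) (ext (gcop K) (X i j a))) (X i j a :: gen word \<Rightarrow>\<^sub>0 'k)" .
qed (rule hom_id)

lemma bialgebra_hrels: "bialgebra (hrels K K :: (gen word \<Rightarrow>\<^sub>0 'k::field) set) (ext (gcop K)) (heps K)"
  unfolding bialgebra_def
  by (simp add: alg_map_comult char_map_heps comult_coassoc lcounit_comult rcounit_comult)

section \<open>The antipode and condition (HG4)\<close>

definition antipode_letter :: "gen \<Rightarrow> gen" where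
  "antipode_letter = (\<lambda>(i, j, a). (j, i, Suc a))"

definition antipode :: "(gen word \<Rightarrow>\<^sub>0 'k::field) \<Rightarrow> (gen word \<Rightarrow>\<^sub>0 'k)" where
  "antipode = linext (\<lambda>w. Poly_Mapping.single (Word (rev (map antipode_letter (letters w)))) 1)"

lemma lin_antipode: "lin antipode"
  by (simp add: antipode_def lin_linext)

lemma antipode_single:
  "antipode (Poly_Mapping.single w c) = Poly_Mapping.single (Word (rev (map antipode_letter (letters w)))) c"
  by (simp add: antipode_def linext_single sc_single)

lemma antipode_mult: "antipode (p * q) = antipode q * antipode (p :: gen word \<Rightarrow>\<^sub>0 'k::field)"
  by (rule bilin_eq[where F="\<lambda>p q. antipode (p * q)" and G="\<lambda>p q. antipode q * antipode p"])
     (simp_all add: lin_comp[OF lin_antipode lin_mult_left] lin_comp[OF lin_antipode lin_mult_right]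
        lin_comp[OF lin_mult_right lin_antipode] lin_comp[OF lin_mult_left lin_antipode]
        mult_single antipode_single plus_word_def)

lemma antipode_one: "antipode 1 = 1"
  by (simp add: antipode_single zero_word_def flip: single_one)

lemma antipode_X: "antipode (X i j a) = X j i (Suc a)"
  by (simp add: X_def antipode_single antipode_letter_def)

lemma antipode_rel:
  assumes "r \<in> hrels q p"
  shows "antipode r \<in> hrels p (q :: nat)"
  using assms
proof (cases rule: hrels_cases)
  case (out_of_range i j a)
  then show ?thesis
    unfolding out_of_range(1) antipode_X by (intro X_out_of_range_mem_hrels) auto
next
  case (row i i' a)
  then have "antipode r = (\<Sum>l\<in>{1..p}. X l i' (Suc (Suc a)) * X l i (Suc a)) - (if i' = i then 1 else 0)"
    by (auto simp: lin_diff[OF lin_antipode] lin_sum[OF lin_antipode] lin_zero[OF lin_antipode]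
        antipode_mult antipode_X antipode_one)
  then show ?thesis by (simp only: col_rel_mem_hrels row(2,3))
next
  case (col j j' a)
  then have "antipode r = (\<Sum>l\<in>{1..q}. X j' l (Suc a) * X j l (Suc (Suc a))) - (if j' = j then 1 else 0)"
    by (auto simp: lin_diff[OF lin_antipode] lin_sum[OF lin_antipode] lin_zero[OF lin_antipode]
        antipode_mult antipode_X antipode_one)
  then show ?thesis by (simp only: row_rel_mem_hrels col(2,3))
qed

lemma lin_map_antipode: "lin_map (hrels q p) (hrels p (q :: nat)) antipode"
proof -
  have "antipode x \<in> ideal_of (hrels p q)" if "x \<in> ideal_of (hrels q p)" for x :: "gen word \<Rightarrow>\<^sub>0 'a"
    using that
  proof (induction x rule: ideal_of.induct)
    case (gen r a b)
    then show ?case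
      using ideal_of.gen[OF antipode_rel[OF gen], of "antipode b" "antipode a"]
      by (simp add: antipode_mult mult.assoc)
  qed (simp_all add: lin_zero[OF lin_antipode] lin_add[OF lin_antipode] ideal_of.zero ideal_of.add)
  then show ?thesis
    unfolding lin_map_def eqv_def
    by (simp add: lin_add[OF lin_antipode] lin_sc[OF lin_antipode] ideal_of.zero flip: lin_diff[OF lin_antipode])
qed

lemma mulmap_tmap_id_antipode_tens_mult:
  "mulmap (tmap id antipode (tens P Q * y)) = P * mulmap (tmap id antipode y) * antipode (Q :: gen word \<Rightarrow>\<^sub>0 'k::field)"
proof (rule lin_eq[where f="\<lambda>y. mulmap (tmap id antipode (tens P Q * y))"])
  show "lin (\<lambda>y. mulmap (tmap id antipode (tens P Q * y)))"
    by (intro lin_comp[OF lin_mulmap] lin_comp[OF lin_tmap] lin_mult_right)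
  show "lin (\<lambda>y. P * mulmap (tmap id antipode y) * antipode Q)"
    by (intro lin_comp[OF lin_mult_left] lin_comp[OF lin_mult_right] lin_comp[OF lin_mulmap] lin_tmap)
  fix w :: "gen word \<times> gen word"
  show "mulmap (tmap id antipode (tens P Q * Poly_Mapping.single w 1))
      = P * mulmap (tmap id antipode (Poly_Mapping.single w 1)) * antipode Q"
    by (cases w) (simp add: tens_mult tmap_tens[OF lin_id(1) lin_antipode] mulmap_tens antipode_mult
        mult.assoc flip: tens_single[where c=1 and d=1, simplified])
qed

lemma mulmap_tmap_antipode_id_mult_tens:
  "mulmap (tmap antipode id (y * tens P Q)) = antipode P * mulmap (tmap antipode id y) * (Q :: gen word \<Rightarrow>\<^sub>0 'k::field)"
proof (rule lin_eq[where f="\<lambda>y. mulmap (tmap antipode id (y * tens P Q))"])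
  show "lin (\<lambda>y. mulmap (tmap antipode id (y * tens P Q)))"
    by (intro lin_comp[OF lin_mulmap] lin_comp[OF lin_tmap] lin_mult_left)
  show "lin (\<lambda>y. antipode P * mulmap (tmap antipode id y) * Q)"
    by (intro lin_comp[OF lin_mult_left] lin_comp[OF lin_mult_right] lin_comp[OF lin_mulmap] lin_tmap)
  fix w :: "gen word \<times> gen word"
  show "mulmap (tmap antipode id (Poly_Mapping.single w 1 * tens P Q))
      = antipode P * mulmap (tmap antipode id (Poly_Mapping.single w 1)) * Q"
    by (cases w) (simp add: tens_mult tmap_tens[OF lin_antipode lin_id(1)] mulmap_tens antipode_mult
        mult.assoc flip: tens_single[where c=1 and d=1, simplified])
qed

lemma eqv_mulmap_tmap_id_antipode_mult:
  assumes "eqv R (mulmap (tmap id antipode y)) (sc c 1)"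
  shows "eqv R (mulmap (tmap id antipode (t * y))) (sc c (mulmap (tmap id antipode (t :: _ \<Rightarrow>\<^sub>0 'k::field))))"
proof (rule lin_eqv[where f="\<lambda>t. mulmap (tmap id antipode (t * y))" and h="\<lambda>t. sc c (mulmap (tmap id antipode t))"])
  show "lin (\<lambda>t. mulmap (tmap id antipode (t * y)))"
    by (intro lin_comp[OF lin_mulmap] lin_comp[OF lin_tmap] lin_mult_left)
  show "lin (\<lambda>t. sc c (mulmap (tmap id antipode t)))"
    by (intro lin_comp[OF lin_sc_left] lin_comp[OF lin_mulmap] lin_tmap)
  fix w :: "gen word \<times> gen word"
  obtain u v where w: "w = (u, v)" by (cases w)
  let ?P = "Poly_Mapping.single u (1::'k)" and ?Q = "Poly_Mapping.single v (1::'k)"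
  have "mulmap (tmap id antipode (tens ?P ?Q * y)) = ?P * mulmap (tmap id antipode y) * antipode ?Q"
    by (rule mulmap_tmap_id_antipode_tens_mult)
  also have "eqv R \<dots> (?P * sc c 1 * antipode ?Q)"
    by (intro eqv_mult eqv_refl assms)
  also have "\<dots> = sc c (mulmap (tmap id antipode (tens ?P ?Q)))"
    by (simp add: tmap_tens[OF lin_id(1) lin_antipode] mulmap_tens mult_sc_one_mult)
  finally show "eqv R (mulmap (tmap id antipode (Poly_Mapping.single w 1 * y)))
      (sc c (mulmap (tmap id antipode (Poly_Mapping.single w 1))))"
    by (simp only: w tens_single mult_1)
qed

lemma eqv_mulmap_tmap_antipode_id_mult:
  assumes "eqv R (mulmap (tmap antipode id t)) (sc c 1)"
  shows "eqv R (mulmap (tmap antipode id (t * s))) (sc c (mulmap (tmap antipode id (s :: _ \<Rightarrow>\<^sub>0 'k::field))))"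
proof (rule lin_eqv[where f="\<lambda>s. mulmap (tmap antipode id (t * s))" and h="\<lambda>s. sc c (mulmap (tmap antipode id s))"])
  show "lin (\<lambda>s. mulmap (tmap antipode id (t * s)))"
    by (intro lin_comp[OF lin_mulmap] lin_comp[OF lin_tmap] lin_mult_right)
  show "lin (\<lambda>s. sc c (mulmap (tmap antipode id s)))"
    by (intro lin_comp[OF lin_sc_left] lin_comp[OF lin_mulmap] lin_tmap)
  fix w :: "gen word \<times> gen word"
  obtain u v where w: "w = (u, v)" by (cases w)
  let ?P = "Poly_Mapping.single u (1::'k)" and ?Q = "Poly_Mapping.single v (1::'k)"
  have "mulmap (tmap antipode id (t * tens ?P ?Q)) = antipode ?P * mulmap (tmap antipode id t) * ?Q"
    by (rule mulmap_tmap_antipode_id_mult_tens)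
  also have "eqv R \<dots> (antipode ?P * sc c 1 * ?Q)"
    by (intro eqv_mult eqv_refl assms)
  also have "\<dots> = sc c (mulmap (tmap antipode id (tens ?P ?Q)))"
    by (simp add: tmap_tens[OF lin_antipode lin_id(1)] mulmap_tens mult_sc_one_mult)
  finally show "eqv R (mulmap (tmap antipode id (t * Poly_Mapping.single w 1)))
      (sc c (mulmap (tmap antipode id (Poly_Mapping.single w 1))))"
    by (simp only: w tens_single mult_1)
qed

lemma mulmap_tmap_antipode_comult_one:
  "mulmap (tmap id antipode (ext (gcop K) 1)) = (1 :: gen word \<Rightarrow>\<^sub>0 'k::field)"
  "mulmap (tmap antipode id (ext (gcop K) 1)) = (1 :: gen word \<Rightarrow>\<^sub>0 'k::field)"
  by (simp_all add: hom_one[OF hom_ext] tmap_tens lin_id lin_antipode mulmap_tens antipode_one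
      flip: tens_one)

lemma antipode_comult_left_X:
  "eqv (hrels m n) (mulmap (tmap id antipode (ext (gcop n) (X i j a))))
     (sc (heps m (X i j a)) (1 :: gen word \<Rightarrow>\<^sub>0 'k::field))"
proof -
  have "mulmap (tmap id antipode (ext (gcop n) (X i j a))) = (\<Sum>k\<in>{1..n}. X i k a * X j k (Suc a) :: _ \<Rightarrow>\<^sub>0 'k)"
    by (simp add: comult_X lin_sum[OF lin_mulmap] lin_sum[OF lin_tmap] tmap_tens[OF lin_id(1) lin_antipode]
        mulmap_tens antipode_X)
  moreover have "eqv (hrels m n) (\<Sum>k\<in>{1..n}. X i k a * X j k (Suc a)) (sc (heps m (X i j a)) (1 :: _ \<Rightarrow>\<^sub>0 'k))"
  proof (cases "i \<in> {1..m} \<and> j \<in> {1..m}")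
    case True
    then show ?thesis
      using eqv_gen[OF row_rel_mem_hrels[where i=i and i'=j and p=m and q=n and a=a]] by (auto simp: heps_X sc_one_eq_single_zero)
  next
    case False
    have "X i k a * X j k (Suc a) \<in> ideal_of (hrels m n)" for k
    proof (cases "i \<in> {1..m}")
      case True
      with False show ?thesis by (intro ideal_left X_out_of_range_mem_ideal) auto
    qed (intro ideal_right X_out_of_range_mem_ideal; auto)
    with False show ?thesis by (auto simp: heps_X eqv_def intro: ideal_sum)
  qed
  ultimately show ?thesis by simp
qed

lemma antipode_comult_right_X:
  "eqv (hrels m n) (mulmap (tmap antipode id (ext (gcop m) (X i j a))))
     (sc (heps n (X i j a)) (1 :: gen word \<Rightarrow>\<^sub>0 'k::field))"
proof -
  have "mulmap (tmap antipode id (ext (gcop m) (X i j a))) = (\<Sum>k\<in>{1..m}. X k i (Suc a) * X k j a :: _ \<Rightarrow>\<^sub>0 'k)"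
    by (simp add: comult_X lin_sum[OF lin_mulmap] lin_sum[OF lin_tmap] tmap_tens[OF lin_antipode lin_id(1)]
        mulmap_tens antipode_X)
  moreover have "eqv (hrels m n) (\<Sum>k\<in>{1..m}. X k i (Suc a) * X k j a) (sc (heps n (X i j a)) (1 :: _ \<Rightarrow>\<^sub>0 'k))"
  proof (cases "i \<in> {1..n} \<and> j \<in> {1..n}")
    case True
    then show ?thesis
      using eqv_gen[OF col_rel_mem_hrels[where j=i and j'=j and p=m and q=n and a=a]] by (auto simp: heps_X sc_one_eq_single_zero)
  next
    case False
    have "X k i (Suc a) * X k j a \<in> ideal_of (hrels m n)" for k
    proof (cases "i \<in> {1..n}")
      case True
      with False show ?thesis by (intro ideal_left X_out_of_range_mem_ideal) auto
    qed (intro ideal_right X_out_of_range_mem_ideal; auto)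
    with False show ?thesis by (auto simp: heps_X eqv_def intro: ideal_sum)
  qed
  ultimately show ?thesis by simp
qed

lemma eqv_sc_heps_induct:
  fixes \<Phi> :: "(gen word \<Rightarrow>\<^sub>0 'k::field) \<Rightarrow> (gen word \<Rightarrow>\<^sub>0 'k)"
  assumes "lin \<Phi>" "\<Phi> 1 = 1" "\<And>i j a. eqv R (\<Phi> (X i j a)) (sc (heps K (X i j a)) 1)"
    and mult: "\<And>x y. eqv R (\<Phi> x) (sc (heps K x) 1) \<Longrightarrow> eqv R (\<Phi> y) (sc (heps K y) 1) \<Longrightarrow>
      eqv R (\<Phi> (x * y)) (sc (heps K x * heps K y) 1)"
  shows "eqv R (\<Phi> p) (sc (heps K p) 1)"
proof (induction p rule: free_algebra_induct)
  case (sc c x)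
  from eqv_sc[OF this, of c] show ?case by (simp add: lin_sc[OF assms(1)] heps_sc sc_sc)
next
  case (add x y)
  from eqv_add[OF this] show ?case by (simp add: lin_add[OF assms(1)] heps_add sc_add_left)
qed (simp_all add: assms heps_one heps_mult)

lemma antipode_comult_left:
  "eqv (hrels m n) (mulmap (tmap id antipode (ext (gcop n) p))) (sc (heps m p) (1 :: gen word \<Rightarrow>\<^sub>0 'k::field))"
proof (rule eqv_sc_heps_induct[where \<Phi>="\<lambda>p. mulmap (tmap id antipode (ext (gcop n) p))"])
  show "lin (\<lambda>p. mulmap (tmap id antipode (ext (gcop n) p)))"
    by (intro lin_comp[OF lin_mulmap] lin_comp[OF lin_tmap] lin_comult)
  fix x y :: "gen word \<Rightarrow>\<^sub>0 'k"
  assume x: "eqv (hrels m n) (mulmap (tmap id antipode (ext (gcop n) x))) (sc (heps m x) 1)"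
    and y: "eqv (hrels m n) (mulmap (tmap id antipode (ext (gcop n) y))) (sc (heps m y) 1)"
  have "eqv (hrels m n) (mulmap (tmap id antipode (ext (gcop n) (x * y))))
      (sc (heps m y) (mulmap (tmap id antipode (ext (gcop n) x))))"
    unfolding hom_mult[OF hom_ext] by (rule eqv_mulmap_tmap_id_antipode_mult[OF y])
  also have "eqv (hrels m n) \<dots> (sc (heps m y) (sc (heps m x) 1))"
    by (rule eqv_sc[OF x])
  finally show "eqv (hrels m n) (mulmap (tmap id antipode (ext (gcop n) (x * y)))) (sc (heps m x * heps m y) 1)"
    by (simp add: sc_sc mult.commute)
qed (simp_all add: mulmap_tmap_antipode_comult_one antipode_comult_left_X)

lemma antipode_comult_right:
  "eqv (hrels m n) (mulmap (tmap antipode id (ext (gcop m) p))) (sc (heps n p) (1 :: gen word \<Rightarrow>\<^sub>0 'k::field))"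
proof (rule eqv_sc_heps_induct[where \<Phi>="\<lambda>p. mulmap (tmap antipode id (ext (gcop m) p))"])
  show "lin (\<lambda>p. mulmap (tmap antipode id (ext (gcop m) p)))"
    by (intro lin_comp[OF lin_mulmap] lin_comp[OF lin_tmap] lin_comult)
  fix x y :: "gen word \<Rightarrow>\<^sub>0 'k"
  assume x: "eqv (hrels m n) (mulmap (tmap antipode id (ext (gcop m) x))) (sc (heps n x) 1)"
    and y: "eqv (hrels m n) (mulmap (tmap antipode id (ext (gcop m) y))) (sc (heps n y) 1)"
  have "eqv (hrels m n) (mulmap (tmap antipode id (ext (gcop m) (x * y))))
      (sc (heps n x) (mulmap (tmap antipode id (ext (gcop m) y))))"
    unfolding hom_mult[OF hom_ext] by (rule eqv_mulmap_tmap_antipode_id_mult[OF x])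
  also have "eqv (hrels m n) \<dots> (sc (heps n x) (sc (heps n y) 1))"
    by (rule eqv_sc[OF y])
  finally show "eqv (hrels m n) (mulmap (tmap antipode id (ext (gcop m) (x * y)))) (sc (heps n x * heps n y) 1)"
    by (simp add: sc_sc)
qed (simp_all add: mulmap_tmap_antipode_comult_one antipode_comult_right_X)

section \<open>Normal forms: H(p, q) is non-zero\<close>

definition pivot :: "nat \<Rightarrow> nat" where
  "pivot a = (if even a then 1 else 2)"

definition level :: "gen \<Rightarrow> nat" where
  "level g = snd (snd g)"

definition in_range :: "nat \<Rightarrow> nat \<Rightarrow> gen \<Rightarrow> bool" where
  "in_range p q g \<longleftrightarrow> fst g \<in> {1..p} \<and> fst (snd g) \<in> {1..q}"

text \<open>Rewriting rules for a leading pair of letters: \<open>reduct p q g c = Some (d, L, f, h)\<close>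
  stands for g c \<rightarrow> (if d then 1 else 0) - (\<Sum>l\<in>L. f l \<cdot> h l).  The first rule isolates the
  summand l = pivot a of the row relation at level a, the second that of the column relation at
  level a'.  Alternating the pivot between consecutive levels leaves a single kind of overlap,
  x(a)_(i,c) x(a+1)_(c,c) x(a)_(c,j) with c = pivot a; it is resolved in \<open>row_action_overlap\<close>
  and \<open>col_action_overlap\<close>.\<close>

definition reduct :: "nat \<Rightarrow> nat \<Rightarrow> gen \<Rightarrow> gen \<Rightarrow> (bool \<times> nat set \<times> (nat \<Rightarrow> gen) \<times> (nat \<Rightarrow> gen)) option" where
  "reduct p q g c = (case (g, c) of ((i, j, a), (i', j', a')) \<Rightarrow>
     if a' = Suc a \<and> j = pivot a \<and> j' = pivot a
     then Some (i = i', {1..q} - {pivot a}, \<lambda>l. (i, l, a), \<lambda>l. (i', l, a'))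
     else if a = Suc a' \<and> i = pivot a' \<and> i' = pivot a'
     then Some (j = j', {1..p} - {pivot a'}, \<lambda>l. (l, j, a), \<lambda>l. (l, j', a'))
     else None)"

fun reduced :: "nat \<Rightarrow> nat \<Rightarrow> gen list \<Rightarrow> bool" where
  "reduced p q [] = True"
| "reduced p q [g] = in_range p q g"
| "reduced p q (g # c # w) \<longleftrightarrow> in_range p q g \<and> reduct p q g c = None \<and> reduced p q (c # w)"

lemma pivot_Suc: "pivot (Suc a) \<noteq> pivot a"
  by (simp add: pivot_def)

lemma pivot_in_range: "2 \<le> q \<Longrightarrow> pivot a \<in> {1..q}"
  by (auto simp: pivot_def)

lemma reduced_Cons_iff:
  "reduced p q (g # w) \<longleftrightarrow> in_range p q g \<and> reduced p q w \<and> (w \<noteq> [] \<longrightarrow> reduct p q g (hd w) = None)"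
  by (cases w) auto

lemma reduct_row: "reduct p q (i, pivot a, a) (i', pivot a, Suc a)
    = Some (i = i', {1..q} - {pivot a}, \<lambda>l. (i, l, a), \<lambda>l. (i', l, Suc a))"
  by (simp add: reduct_def)

lemma reduct_col: "reduct p q (pivot a, j, Suc a) (pivot a, j', a)
    = Some (j = j', {1..p} - {pivot a}, \<lambda>l. (l, j, Suc a), \<lambda>l. (l, j', a))"
  by (simp add: reduct_def)

lemma reduct_None_level_Suc: "j \<noteq> pivot a \<Longrightarrow> level e = Suc a \<Longrightarrow> reduct p q (i, j, a) e = None"
  by (cases e) (auto simp: reduct_def level_def)

lemma reduct_None_level: "i \<noteq> pivot a \<Longrightarrow> level e = a \<Longrightarrow> reduct p q (i, j, Suc a) e = None"
  by (cases e) (auto simp: reduct_def level_def)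

lemma reduct_SomeE:
  assumes "reduct p q g c = Some (d, L, f, h)"
  obtains (row) i a i' where "g = (i, pivot a, a)" "c = (i', pivot a, Suc a)"
      "d = (i = i')" "L = {1..q} - {pivot a}" "f = (\<lambda>l. (i, l, a))" "h = (\<lambda>l. (i', l, Suc a))"
  | (col) j a j' where "g = (pivot a, j, Suc a)" "c = (pivot a, j', a)"
      "d = (j = j')" "L = {1..p} - {pivot a}" "f = (\<lambda>l. (l, j, Suc a))" "h = (\<lambda>l. (l, j', a))"
proof -
  obtain i j a i' j' a' where gc: "g = (i, j, a)" "c = (i', j', a')" by (cases g, cases c)
  show thesis
  proof (cases "a' = Suc a \<and> j = pivot a \<and> j' = pivot a")
    case True
    with assms show thesis by (intro row[where i=i and a=a and i'=i']) (auto simp: gc reduct_def)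
  next
    case False
    with assms have "a = Suc a' \<and> i = pivot a' \<and> i' = pivot a'"
      by (auto simp: gc reduct_def split: if_splits)
    with False assms show thesis by (intro col[where j=j and a=a' and j'=j']) (auto simp: gc reduct_def)
  qed
qed

lemma reduct_Some:
  assumes "reduct p q g c = Some (d, L, f, h)" "l \<in> L"
  shows "finite L" "level (f l) = level g" "level (h l) = level c"
    "in_range p q g \<Longrightarrow> in_range p q (f l)" "in_range p q c \<Longrightarrow> in_range p q (h l)"
    "level e = level c \<Longrightarrow> reduct p q (f l) e = None"
  using assms(1)
  by (cases rule: reduct_SomeE; use assms(2) in \<open>auto simp: level_def in_range_def reduct_None_level_Suc reduct_None_level\<close>)+

lemma reduct_row_pivot_not_None:
  "reduct p q (i', pivot a, Suc a) d \<noteq> None \<Longrightarrow> i' = pivot a \<and> (\<exists>y. d = (pivot a, y, a))"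
  using pivot_Suc[of a] by (cases d) (auto simp: reduct_def split: if_splits)

lemma reduct_col_pivot_not_None:
  "reduct p q (pivot a, j', a) d \<noteq> None \<Longrightarrow> j' = pivot a \<and> (\<exists>x. d = (x, pivot a, Suc a))"
  using pivot_Suc by (cases d) (auto simp: reduct_def split: if_splits)

type_synonym 'k vec = "gen list \<Rightarrow>\<^sub>0 'k"

text \<open>\<open>nf_cons p q g w\<close> is the normal form of the word g w for reduced w.  The length test
  only serves the termination proof; \<open>nf_cons_reduct\<close> shows that it is vacuous.\<close>

function nf_cons :: "nat \<Rightarrow> nat \<Rightarrow> gen \<Rightarrow> gen list \<Rightarrow> 'k::field vec" where
  "nf_cons p q g [] = Poly_Mapping.single [g] 1"
| "nf_cons p q g (c # u) = (case reduct p q g c of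
      None \<Rightarrow> Poly_Mapping.single (g # c # u) 1
    | Some (d, L, f, h) \<Rightarrow> (if d then Poly_Mapping.single u 1 else 0)
        - (\<Sum>l\<in>L. linext (\<lambda>v. if length v \<le> length u then nf_cons p q (f l) v
                               else Poly_Mapping.single (f l # v) 1) (nf_cons p q (h l) u)))"
  by pat_completeness auto
termination
  by (relation "measure (\<lambda>(p, q, g, w). length w)") auto

lemma nf_cons_irreducible: "reduct p q g c = None \<Longrightarrow> nf_cons p q g (c # u) = Poly_Mapping.single (g # c # u) 1"
  by simp

lemma length_keys_nf_cons:
  assumes "v \<in> Poly_Mapping.keys (nf_cons p q g w :: 'k::field vec)"
  shows "length v \<le> Suc (length w) \<and> (length v = Suc (length w) \<longrightarrow> (\<exists>g' v'. v = g' # v' \<and> level g' = level g))"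
  using assms
proof (induction w arbitrary: g v rule: length_induct)
  case (1 w)
  have ih: "\<And>ys g' v'. length ys < length w \<Longrightarrow> v' \<in> Poly_Mapping.keys (nf_cons p q g' ys :: 'k vec) \<Longrightarrow>
      length v' \<le> Suc (length ys) \<and> (length v' = Suc (length ys) \<longrightarrow> (\<exists>g'' v''. v' = g'' # v'' \<and> level g'' = level g'))"
    using "1.IH" by blast
  show ?case
  proof (cases w)
    case (Cons c u)
    show ?thesis
    proof (cases "reduct p q g c")
      case None
      with "1.prems" show ?thesis by (simp add: Cons)
    next
      case (Some r)
      then obtain d L f h where r: "reduct p q g c = Some (d, L, f, h)" by (cases r) auto
      from "1.prems" r have "v = u \<or> (\<exists>l\<in>L. \<exists>x\<in>Poly_Mapping.keys (nf_cons p q (h l) u :: 'k vec).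
          v \<in> Poly_Mapping.keys (if length x \<le> length u then nf_cons p q (f l) x else Poly_Mapping.single (f l # x) (1::'k)))"
        by (intro keys_delta_minus_sum_linext) (simp add: Cons)
      then show ?thesis
      proof (elim disjE bexE)
        fix l x
        assume l: "l \<in> L" and x: "x \<in> Poly_Mapping.keys (nf_cons p q (h l) u :: 'k vec)"
          and v: "v \<in> Poly_Mapping.keys (if length x \<le> length u then nf_cons p q (f l) x else Poly_Mapping.single (f l # x) (1::'k))"
        have x_len: "length x \<le> Suc (length u)" using ih[OF _ x] Cons by simp
        show ?thesis
        proof (cases "length x \<le> length u")
          case True
          then have "length v \<le> Suc (length x)"
            using ih[where ys=x and g'="f l" and v'=v] v Cons by simp
          with True Cons show ?thesis by simp
        next
          case False
          with v x_len reduct_Some(2)[OF r l] Cons show ?thesis by simp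
        qed
      qed (simp add: Cons)
    qed
  qed (use "1.prems" in simp)
qed

lemma long_keys_nf_cons:
  assumes "v \<in> Poly_Mapping.keys (nf_cons p q g u :: 'k::field vec)" "\<not> length v \<le> length u"
  shows "\<exists>g' v'. v = g' # v' \<and> level g' = level g"
  using length_keys_nf_cons[OF assms(1)] assms(2) by auto

lemma long_keys_nf_cons_irreducible:
  assumes r: "reduct p q g c = Some (d, L, f, h)" and l: "l \<in> L"
    and "x \<in> Poly_Mapping.keys (nf_cons p q (h l) u :: 'k::field vec)" "\<not> length x \<le> length u"
  shows "\<exists>e x'. x = e # x' \<and> reduct p q (f l) e = None"
proof -
  obtain e x' where x: "x = e # x'" and "level e = level (h l)"
    using long_keys_nf_cons[OF assms(3,4)] by blast
  then have "reduct p q (f l) e = None" using reduct_Some(3,6)[OF r l] by simp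
  with x show ?thesis by blast
qed

lemma nf_cons_reduct:
  assumes r: "reduct p q g c = Some (d, L, f, h)"
  shows "nf_cons p q g (c # u) = (if d then Poly_Mapping.single u 1 else 0)
    - (\<Sum>l\<in>L. linext (nf_cons p q (f l)) (nf_cons p q (h l) u) :: 'k::field vec)"
proof -
  have "linext (\<lambda>v. if length v \<le> length u then nf_cons p q (f l) v else Poly_Mapping.single (f l # v) 1)
      (nf_cons p q (h l) u) = linext (nf_cons p q (f l)) (nf_cons p q (h l) u :: 'k vec)" if l: "l \<in> L" for l
  proof (rule linext_cong[OF refl])
    fix v assume v: "v \<in> Poly_Mapping.keys (nf_cons p q (h l) u :: 'k vec)"
    show "(if length v \<le> length u then nf_cons p q (f l) v else Poly_Mapping.single (f l # v) 1) = nf_cons p q (f l) v"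
    proof (cases "length v \<le> length u")
      case False
      then obtain e v' where "v = e # v'" "reduct p q (f l) e = None"
        using long_keys_nf_cons_irreducible[OF r l v] by blast
      with False show ?thesis by (simp add: nf_cons_irreducible)
    qed simp
  qed
  with r show ?thesis by (simp cong: sum.cong)
qed

lemma keys_nf_cons_reduct:
  assumes "reduct p q g c = Some (d, L, f, h)" "v \<in> Poly_Mapping.keys (nf_cons p q g (c # u) :: 'k::field vec)"
  shows "v = u \<or> (\<exists>l\<in>L. \<exists>x\<in>Poly_Mapping.keys (nf_cons p q (h l) u :: 'k vec).
    v \<in> Poly_Mapping.keys (nf_cons p q (f l) x :: 'k vec))"
  using keys_delta_minus_sum_linext[OF assms(2)[unfolded nf_cons_reduct[OF assms(1)]]] .

lemma nf_cons_reduced: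
  assumes "reduced p q w" "in_range p q g" "v \<in> Poly_Mapping.keys (nf_cons p q g w :: 'k::field vec)"
  shows "reduced p q v"
  using assms
proof (induction w arbitrary: g v rule: length_induct)
  case (1 w)
  have ih: "\<And>ys g' v'. length ys < length w \<Longrightarrow> reduced p q ys \<Longrightarrow> in_range p q g' \<Longrightarrow>
      v' \<in> Poly_Mapping.keys (nf_cons p q g' ys :: 'k vec) \<Longrightarrow> reduced p q v'"
    using "1.IH" by blast
  show ?case
  proof (cases w)
    case (Cons c u)
    have cu: "reduced p q (c # u)" using "1.prems"(1) Cons by simp
    show ?thesis
    proof (cases "reduct p q g c")
      case None
      with "1.prems" cu show ?thesis by (simp add: Cons)
    next
      case (Some r)
      then obtain d L f h where r: "reduct p q g c = Some (d, L, f, h)" by (cases r) auto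
      from keys_nf_cons_reduct[OF r "1.prems"(3)[unfolded Cons]] show ?thesis
      proof (elim disjE bexE)
        fix l x
        assume l: "l \<in> L" and x: "x \<in> Poly_Mapping.keys (nf_cons p q (h l) u :: 'k vec)"
          and v: "v \<in> Poly_Mapping.keys (nf_cons p q (f l) x :: 'k vec)"
        have f: "in_range p q (f l)" using reduct_Some(4)[OF r l] "1.prems"(2) .
        have "in_range p q (h l)" using reduct_Some(5)[OF r l] cu by (simp add: reduced_Cons_iff)
        with x cu Cons have x_red: "reduced p q x" by (intro ih[OF _ _ _ x]) (simp_all add: reduced_Cons_iff)
        show ?thesis
        proof (cases "length x \<le> length u")
          case True
          with Cons show ?thesis by (intro ih[OF _ x_red f v]) simp
        next
          case False
          then obtain e x' where x': "x = e # x'" and e: "reduct p q (f l) e = None"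
            using long_keys_nf_cons_irreducible[OF r l x] by blast
          with v have "v = f l # x" by (simp add: nf_cons_irreducible)
          with f x_red x' e show ?thesis by simp
        qed
      qed (use cu in \<open>simp add: reduced_Cons_iff\<close>)
    qed
  qed (use "1.prems" in simp)
qed

definition reduced_vec :: "nat \<Rightarrow> nat \<Rightarrow> 'k::zero vec \<Rightarrow> bool" where
  "reduced_vec p q v \<longleftrightarrow> (\<forall>w\<in>Poly_Mapping.keys v. reduced p q w)"

definition letter_action :: "nat \<Rightarrow> nat \<Rightarrow> gen \<Rightarrow> 'k::field vec \<Rightarrow> 'k vec" where
  "letter_action p q g v = (if in_range p q g then linext (nf_cons p q g) v else 0)"

lemma lin_letter_action: "lin (letter_action p q g)"
  unfolding letter_action_def lin_def by (simp add: linext_add linext_sc)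

lemma letter_action_single:
  "in_range p q g \<Longrightarrow> letter_action p q g (Poly_Mapping.single w 1) = nf_cons p q g w"
  by (simp add: letter_action_def linext_single)

lemma reduced_vec_letter_action:
  assumes "reduced_vec p q v"
  shows "reduced_vec p q (letter_action p q g v :: 'k::field vec)"
  unfolding reduced_vec_def
proof
  fix w assume w: "w \<in> Poly_Mapping.keys (letter_action p q g v)"
  show "reduced p q w"
  proof (cases "in_range p q g")
    case True
    with w obtain x where "x \<in> Poly_Mapping.keys v" "w \<in> Poly_Mapping.keys (nf_cons p q g x :: 'k vec)"
      using subsetD[OF keys_linext] by (fastforce simp: letter_action_def)
    with assms True show ?thesis
      unfolding reduced_vec_def by (blast intro: nf_cons_reduced)
  qed (use w in \<open>simp add: letter_action_def\<close>)
qed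

lemma letter_action_push:
  "reduced p q (g # w) \<Longrightarrow> letter_action p q g (Poly_Mapping.single w 1) = Poly_Mapping.single (g # w) 1"
  by (cases w) (simp_all add: letter_action_single reduced_Cons_iff nf_cons_irreducible)

lemma long_keys_letter_action:
  assumes "v \<in> Poly_Mapping.keys (letter_action p q g (Poly_Mapping.single u 1) :: 'k::field vec)"
    "\<not> length v \<le> length u"
  shows "\<exists>g' v'. v = g' # v' \<and> level g' = level g"
proof -
  have "in_range p q g" using assms(1) by (auto simp: letter_action_def split: if_splits)
  with assms(1) have "v \<in> Poly_Mapping.keys (nf_cons p q g u :: 'k vec)" by (simp add: letter_action_single)
  then show ?thesis using assms(2) by (rule long_keys_nf_cons)
qed

lemma letter_action_row:
  assumes "i \<in> {1..p}" "i' \<in> {1..p}" "2 \<le> q"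
  shows "letter_action p q (i, pivot a, a) (Poly_Mapping.single ((i', pivot a, Suc a) # u) 1)
    = (if i = i' then Poly_Mapping.single u 1 else 0)
      - (\<Sum>l\<in>{1..q} - {pivot a}. letter_action p q (i, l, a) (letter_action p q (i', l, Suc a) (Poly_Mapping.single u 1)) :: 'k::field vec)"
proof -
  have "letter_action p q (i, l, a) (letter_action p q (i', l, Suc a) (Poly_Mapping.single u 1))
      = linext (nf_cons p q (i, l, a)) (nf_cons p q (i', l, Suc a) u :: 'k vec)" if "l \<in> {1..q} - {pivot a}" for l
    using assms that by (simp add: letter_action_single letter_action_def in_range_def linext_single)
  moreover have "in_range p q (i, pivot a, a)"
    using assms pivot_in_range[OF assms(3)] by (simp add: in_range_def)
  then have "letter_action p q (i, pivot a, a) (Poly_Mapping.single ((i', pivot a, Suc a) # u) 1)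
      = nf_cons p q (i, pivot a, a) ((i', pivot a, Suc a) # u)"
    by (rule letter_action_single)
  ultimately show ?thesis
    by (simp only: nf_cons_reduct[OF reduct_row] cong: sum.cong)
qed

lemma letter_action_col:
  assumes "j \<in> {1..q}" "j' \<in> {1..q}" "2 \<le> p"
  shows "letter_action p q (pivot a, j, Suc a) (Poly_Mapping.single ((pivot a, j', a) # u) 1)
    = (if j = j' then Poly_Mapping.single u 1 else 0)
      - (\<Sum>l\<in>{1..p} - {pivot a}. letter_action p q (l, j, Suc a) (letter_action p q (l, j', a) (Poly_Mapping.single u 1)) :: 'k::field vec)"
proof -
  have "letter_action p q (l, j, Suc a) (letter_action p q (l, j', a) (Poly_Mapping.single u 1))
      = linext (nf_cons p q (l, j, Suc a)) (nf_cons p q (l, j', a) u :: 'k vec)" if "l \<in> {1..p} - {pivot a}" for l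
    using assms that by (simp add: letter_action_single letter_action_def in_range_def linext_single)
  moreover have "in_range p q (pivot a, j, Suc a)"
    using assms pivot_in_range[OF assms(3)] by (simp add: in_range_def)
  then have "letter_action p q (pivot a, j, Suc a) (Poly_Mapping.single ((pivot a, j', a) # u) 1)
      = nf_cons p q (pivot a, j, Suc a) ((pivot a, j', a) # u)"
    by (rule letter_action_single)
  ultimately show ?thesis
    by (simp only: nf_cons_reduct[OF reduct_col] cong: sum.cong)
qed

lemma row_action_push:
  assumes "2 \<le> q" "i \<in> {1..p}" "reduced p q ((i', pivot a, Suc a) # w)"
  shows "(\<Sum>l\<in>{1..q}. letter_action p q (i, l, a) (letter_action p q (i', l, Suc a) (Poly_Mapping.single w 1)))
    = (if i = i' then Poly_Mapping.single w 1 else (0 :: 'k::field vec))"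
proof -
  let ?f = "\<lambda>l. letter_action p q (i, l, a) (letter_action p q (i', l, Suc a) (Poly_Mapping.single w 1)) :: 'k vec"
  have i': "i' \<in> {1..p}" using assms(3) by (simp add: reduced_Cons_iff in_range_def)
  have "(\<Sum>l\<in>{1..q}. ?f l) = ?f (pivot a) + (\<Sum>l\<in>{1..q} - {pivot a}. ?f l)"
    by (rule sum.remove[OF _ pivot_in_range[OF assms(1)]]) simp
  also have "?f (pivot a) = (if i = i' then Poly_Mapping.single w 1 else 0) - (\<Sum>l\<in>{1..q} - {pivot a}. ?f l)"
    by (simp only: letter_action_push[OF assms(3)] letter_action_row[OF assms(2) i' assms(1)])
  finally show ?thesis by simp
qed

lemma col_action_push:
  assumes "2 \<le> p" "j \<in> {1..q}" "reduced p q ((pivot a, j', a) # w)"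
  shows "(\<Sum>l\<in>{1..p}. letter_action p q (l, j, Suc a) (letter_action p q (l, j', a) (Poly_Mapping.single w 1)))
    = (if j = j' then Poly_Mapping.single w 1 else (0 :: 'k::field vec))"
proof -
  let ?f = "\<lambda>l. letter_action p q (l, j, Suc a) (letter_action p q (l, j', a) (Poly_Mapping.single w 1)) :: 'k vec"
  have j': "j' \<in> {1..q}" using assms(3) by (simp add: reduced_Cons_iff in_range_def)
  have "(\<Sum>l\<in>{1..p}. ?f l) = ?f (pivot a) + (\<Sum>l\<in>{1..p} - {pivot a}. ?f l)"
    by (rule sum.remove[OF _ pivot_in_range[OF assms(1)]]) simp
  also have "?f (pivot a) = (if j = j' then Poly_Mapping.single w 1 else 0) - (\<Sum>l\<in>{1..p} - {pivot a}. ?f l)"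
    by (simp only: letter_action_push[OF assms(3)] letter_action_col[OF assms(2) j' assms(1)])
  finally show ?thesis by simp
qed

lemma row_action_after_col_letter:
  assumes "2 \<le> q" "i \<in> {1..p}" "p' \<in> {1..p} - {pivot a}" "y \<in> {1..q}" "reduced p q u"
    and IH: "\<And>v i i'. reduced p q v \<Longrightarrow> length v \<le> length u \<Longrightarrow> i \<in> {1..p} \<Longrightarrow> i' \<in> {1..p} \<Longrightarrow>
      (\<Sum>l\<in>{1..q}. letter_action p q (i, l, a) (letter_action p q (i', l, Suc a) (Poly_Mapping.single v 1)))
        = (if i = i' then Poly_Mapping.single v 1 else (0 :: 'k::field vec))"
  defines "Y \<equiv> letter_action p q (p', y, a) (Poly_Mapping.single u 1) :: 'k vec"
  shows "(\<Sum>l\<in>{1..q}. letter_action p q (i, l, a) (letter_action p q (p', l, Suc a) Y)) = (if i = p' then Y else 0)"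
proof (rule lin_eq_on_keys[where f="\<lambda>Y. \<Sum>l\<in>{1..q}. letter_action p q (i, l, a) (letter_action p q (p', l, Suc a) Y)"])
  show "lin (\<lambda>Y. \<Sum>l\<in>{1..q}. letter_action p q (i, l, a) (letter_action p q (p', l, Suc a) Y) :: 'k vec)"
    by (intro lin_sum_maps lin_comp[OF lin_letter_action lin_letter_action])
  fix v assume v: "v \<in> Poly_Mapping.keys Y"
  have "reduced_vec p q Y"
    unfolding Y_def by (rule reduced_vec_letter_action) (simp add: reduced_vec_def assms(5))
  with v have red: "reduced p q v" by (simp add: reduced_vec_def)
  show "(\<Sum>l\<in>{1..q}. letter_action p q (i, l, a) (letter_action p q (p', l, Suc a) (Poly_Mapping.single v 1)))
      = (if i = p' then Poly_Mapping.single v 1 else 0 :: 'k vec)"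
  proof (cases "length v \<le> length u")
    case True
    with red assms(2,3) show ?thesis by (intro IH) auto
  next
    case False
    then obtain g' v' where "v = g' # v'" "level g' = a"
      using long_keys_letter_action[OF v[unfolded Y_def] False] by (auto simp: level_def)
    with red assms(3) pivot_in_range[OF assms(1)] have "reduced p q ((p', pivot a, Suc a) # v)"
      by (simp add: reduced_Cons_iff reduct_None_level in_range_def)
    then show ?thesis by (rule row_action_push[OF assms(1,2)])
  qed
qed (rule lin_if_zero)

lemma row_action_overlap:
  assumes "2 \<le> p" "2 \<le> q" "i \<in> {1..p}" and w: "reduced p q ((pivot a, y, a) # u)"
    and IH: "\<And>v i i'. reduced p q v \<Longrightarrow> length v \<le> length u \<Longrightarrow> i \<in> {1..p} \<Longrightarrow> i' \<in> {1..p} \<Longrightarrow>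
      (\<Sum>l\<in>{1..q}. letter_action p q (i, l, a) (letter_action p q (i', l, Suc a) (Poly_Mapping.single v 1)))
        = (if i = i' then Poly_Mapping.single v 1 else (0 :: 'k::field vec))"
  shows "(\<Sum>l\<in>{1..q}. letter_action p q (i, l, a)
      (letter_action p q (pivot a, l, Suc a) (Poly_Mapping.single ((pivot a, y, a) # u) 1)))
    = (if i = pivot a then Poly_Mapping.single ((pivot a, y, a) # u) 1 else (0 :: 'k vec))"
proof -
  define Y where "Y p' = (letter_action p q (p', y, a) (Poly_Mapping.single u 1) :: 'k vec)" for p'
  have y: "y \<in> {1..q}" and u: "reduced p q u" using w by (simp_all add: reduced_Cons_iff in_range_def)
  have "letter_action p q (i, l, a) (letter_action p q (pivot a, l, Suc a) (Poly_Mapping.single ((pivot a, y, a) # u) 1))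
      = letter_action p q (i, l, a) (if l = y then Poly_Mapping.single u 1 else 0)
        - letter_action p q (i, l, a) (\<Sum>p'\<in>{1..p} - {pivot a}. letter_action p q (p', l, Suc a) (Y p'))"
    if "l \<in> {1..q}" for l
    unfolding letter_action_col[OF that y assms(1)] Y_def by (rule lin_diff[OF lin_letter_action])
  then have "(\<Sum>l\<in>{1..q}. letter_action p q (i, l, a)
        (letter_action p q (pivot a, l, Suc a) (Poly_Mapping.single ((pivot a, y, a) # u) 1)))
      = (\<Sum>l\<in>{1..q}. letter_action p q (i, l, a) (if l = y then Poly_Mapping.single u 1 else 0))
        - (\<Sum>l\<in>{1..q}. letter_action p q (i, l, a) (\<Sum>p'\<in>{1..p} - {pivot a}. letter_action p q (p', l, Suc a) (Y p')))"
    by (simp only: sum_subtractf[symmetric] cong: sum.cong)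
  also have "(\<Sum>l\<in>{1..q}. letter_action p q (i, l, a) (if l = y then Poly_Mapping.single u 1 else 0)) = Y i"
    using y by (simp add: Y_def if_distrib[of "letter_action p q (i, _, a)"] lin_zero[OF lin_letter_action]
        sum.delta cong: if_cong)
  also have "(\<Sum>l\<in>{1..q}. letter_action p q (i, l, a) (\<Sum>p'\<in>{1..p} - {pivot a}. letter_action p q (p', l, Suc a) (Y p')))
      = (\<Sum>p'\<in>{1..p} - {pivot a}. \<Sum>l\<in>{1..q}. letter_action p q (i, l, a) (letter_action p q (p', l, Suc a) (Y p')))"
    unfolding lin_sum[OF lin_letter_action] by (rule sum.swap)
  also have "\<dots> = (\<Sum>p'\<in>{1..p} - {pivot a}. if i = p' then Y p' else 0)"
    by (rule sum.cong[OF refl]) (simp only: Y_def row_action_after_col_letter[OF assms(2,3) _ y u IH])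
  also have "\<dots> = (if i \<noteq> pivot a then Y i else 0)"
    using assms(3) by (simp add: sum.delta')
  also have "Y i - (if i \<noteq> pivot a then Y i else 0) = (if i = pivot a then Y (pivot a) else 0)"
    by simp
  also have "Y (pivot a) = Poly_Mapping.single ((pivot a, y, a) # u) 1"
    unfolding Y_def by (rule letter_action_push[OF w])
  finally show ?thesis .
qed

lemma row_action_single:
  assumes "2 \<le> p" "2 \<le> q" "i \<in> {1..p}" "i' \<in> {1..p}" "reduced p q w"
  shows "(\<Sum>l\<in>{1..q}. letter_action p q (i, l, a) (letter_action p q (i', l, Suc a) (Poly_Mapping.single w 1)))
    = (if i = i' then Poly_Mapping.single w 1 else (0 :: 'k::field vec))"
  using assms(3-5)
proof (induction w arbitrary: i i' rule: length_induct)
  case (1 w)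
  show ?case
  proof (cases "reduced p q ((i', pivot a, Suc a) # w)")
    case True
    then show ?thesis by (rule row_action_push[OF assms(2) "1.prems"(1)])
  next
    case False
    with "1.prems"(2,3) pivot_in_range[OF assms(2)] obtain d u
      where w: "w = d # u" and "reduct p q (i', pivot a, Suc a) d \<noteq> None"
      by (cases w) (auto simp: reduced_Cons_iff in_range_def)
    then obtain y where i': "i' = pivot a" and d: "d = (pivot a, y, a)"
      using reduct_row_pivot_not_None by blast
    have IH: "(\<Sum>l\<in>{1..q}. letter_action p q (i, l, a) (letter_action p q (i', l, Suc a) (Poly_Mapping.single v 1)))
        = (if i = i' then Poly_Mapping.single v 1 else (0 :: 'k vec))"
      if "reduced p q v" "length v \<le> length u" "i \<in> {1..p}" "i' \<in> {1..p}" for v i i'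
    proof -
      have "length v < length w" using that(2) w by simp
      with "1.IH" that(1,3,4) show ?thesis by blast
    qed
    show ?thesis
      using row_action_overlap[OF assms(1,2) "1.prems"(1) _ IH] "1.prems"(3) by (simp add: w d i')
  qed
qed

lemma col_action_after_row_letter:
  assumes "2 \<le> p" "j \<in> {1..q}" "q' \<in> {1..q} - {pivot a}" "x \<in> {1..p}" "reduced p q u"
    and IH: "\<And>v j j'. reduced p q v \<Longrightarrow> length v \<le> length u \<Longrightarrow> j \<in> {1..q} \<Longrightarrow> j' \<in> {1..q} \<Longrightarrow>
      (\<Sum>l\<in>{1..p}. letter_action p q (l, j, Suc a) (letter_action p q (l, j', a) (Poly_Mapping.single v 1)))
        = (if j = j' then Poly_Mapping.single v 1 else (0 :: 'k::field vec))"
  defines "Y \<equiv> letter_action p q (x, q', Suc a) (Poly_Mapping.single u 1) :: 'k vec"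
  shows "(\<Sum>l\<in>{1..p}. letter_action p q (l, j, Suc a) (letter_action p q (l, q', a) Y)) = (if j = q' then Y else 0)"
proof (rule lin_eq_on_keys[where f="\<lambda>Y. \<Sum>l\<in>{1..p}. letter_action p q (l, j, Suc a) (letter_action p q (l, q', a) Y)"])
  show "lin (\<lambda>Y. \<Sum>l\<in>{1..p}. letter_action p q (l, j, Suc a) (letter_action p q (l, q', a) Y) :: 'k vec)"
    by (intro lin_sum_maps lin_comp[OF lin_letter_action lin_letter_action])
  fix v assume v: "v \<in> Poly_Mapping.keys Y"
  have "reduced_vec p q Y"
    unfolding Y_def by (rule reduced_vec_letter_action) (simp add: reduced_vec_def assms(5))
  with v have red: "reduced p q v" by (simp add: reduced_vec_def)
  show "(\<Sum>l\<in>{1..p}. letter_action p q (l, j, Suc a) (letter_action p q (l, q', a) (Poly_Mapping.single v 1)))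
      = (if j = q' then Poly_Mapping.single v 1 else 0 :: 'k vec)"
  proof (cases "length v \<le> length u")
    case True
    with red assms(2,3) show ?thesis by (intro IH) auto
  next
    case False
    then obtain g' v' where "v = g' # v'" "level g' = Suc a"
      using long_keys_letter_action[OF v[unfolded Y_def] False] by (auto simp: level_def)
    with red assms(3) pivot_in_range[OF assms(1)] have "reduced p q ((pivot a, q', a) # v)"
      by (simp add: reduced_Cons_iff reduct_None_level_Suc in_range_def)
    then show ?thesis by (rule col_action_push[OF assms(1,2)])
  qed
qed (rule lin_if_zero)

lemma col_action_overlap:
  assumes "2 \<le> p" "2 \<le> q" "j \<in> {1..q}" and w: "reduced p q ((x, pivot a, Suc a) # u)"
    and IH: "\<And>v j j'. reduced p q v \<Longrightarrow> length v \<le> length u \<Longrightarrow> j \<in> {1..q} \<Longrightarrow> j' \<in> {1..q} \<Longrightarrow>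
      (\<Sum>l\<in>{1..p}. letter_action p q (l, j, Suc a) (letter_action p q (l, j', a) (Poly_Mapping.single v 1)))
        = (if j = j' then Poly_Mapping.single v 1 else (0 :: 'k::field vec))"
  shows "(\<Sum>l\<in>{1..p}. letter_action p q (l, j, Suc a)
      (letter_action p q (l, pivot a, a) (Poly_Mapping.single ((x, pivot a, Suc a) # u) 1)))
    = (if j = pivot a then Poly_Mapping.single ((x, pivot a, Suc a) # u) 1 else (0 :: 'k vec))"
proof -
  define Y where "Y q' = (letter_action p q (x, q', Suc a) (Poly_Mapping.single u 1) :: 'k vec)" for q'
  have x: "x \<in> {1..p}" and u: "reduced p q u" using w by (simp_all add: reduced_Cons_iff in_range_def)
  have "letter_action p q (l, j, Suc a) (letter_action p q (l, pivot a, a) (Poly_Mapping.single ((x, pivot a, Suc a) # u) 1))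
      = letter_action p q (l, j, Suc a) (if l = x then Poly_Mapping.single u 1 else 0)
        - letter_action p q (l, j, Suc a) (\<Sum>q'\<in>{1..q} - {pivot a}. letter_action p q (l, q', a) (Y q'))"
    if "l \<in> {1..p}" for l
    unfolding letter_action_row[OF that x assms(2)] Y_def by (rule lin_diff[OF lin_letter_action])
  then have "(\<Sum>l\<in>{1..p}. letter_action p q (l, j, Suc a)
        (letter_action p q (l, pivot a, a) (Poly_Mapping.single ((x, pivot a, Suc a) # u) 1)))
      = (\<Sum>l\<in>{1..p}. letter_action p q (l, j, Suc a) (if l = x then Poly_Mapping.single u 1 else 0))
        - (\<Sum>l\<in>{1..p}. letter_action p q (l, j, Suc a) (\<Sum>q'\<in>{1..q} - {pivot a}. letter_action p q (l, q', a) (Y q')))"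
    by (simp only: sum_subtractf[symmetric] cong: sum.cong)
  also have "(\<Sum>l\<in>{1..p}. letter_action p q (l, j, Suc a) (if l = x then Poly_Mapping.single u 1 else 0)) = Y j"
    using x by (simp add: Y_def if_distrib[of "letter_action p q (_, j, Suc a)"] lin_zero[OF lin_letter_action]
        sum.delta cong: if_cong)
  also have "(\<Sum>l\<in>{1..p}. letter_action p q (l, j, Suc a) (\<Sum>q'\<in>{1..q} - {pivot a}. letter_action p q (l, q', a) (Y q')))
      = (\<Sum>q'\<in>{1..q} - {pivot a}. \<Sum>l\<in>{1..p}. letter_action p q (l, j, Suc a) (letter_action p q (l, q', a) (Y q')))"
    unfolding lin_sum[OF lin_letter_action] by (rule sum.swap)
  also have "\<dots> = (\<Sum>q'\<in>{1..q} - {pivot a}. if j = q' then Y q' else 0)"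
    by (rule sum.cong[OF refl]) (simp only: Y_def col_action_after_row_letter[OF assms(1,3) _ x u IH])
  also have "\<dots> = (if j \<noteq> pivot a then Y j else 0)"
    using assms(3) by (simp add: sum.delta')
  also have "Y j - (if j \<noteq> pivot a then Y j else 0) = (if j = pivot a then Y (pivot a) else 0)"
    by simp
  also have "Y (pivot a) = Poly_Mapping.single ((x, pivot a, Suc a) # u) 1"
    unfolding Y_def by (rule letter_action_push[OF w])
  finally show ?thesis .
qed

lemma col_action_single:
  assumes "2 \<le> p" "2 \<le> q" "j \<in> {1..q}" "j' \<in> {1..q}" "reduced p q w"
  shows "(\<Sum>l\<in>{1..p}. letter_action p q (l, j, Suc a) (letter_action p q (l, j', a) (Poly_Mapping.single w 1)))
    = (if j = j' then Poly_Mapping.single w 1 else (0 :: 'k::field vec))"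
  using assms(3-5)
proof (induction w arbitrary: j j' rule: length_induct)
  case (1 w)
  show ?case
  proof (cases "reduced p q ((pivot a, j', a) # w)")
    case True
    then show ?thesis by (rule col_action_push[OF assms(1) "1.prems"(1)])
  next
    case False
    with "1.prems"(2,3) pivot_in_range[OF assms(1)] obtain d u
      where w: "w = d # u" and "reduct p q (pivot a, j', a) d \<noteq> None"
      by (cases w) (auto simp: reduced_Cons_iff in_range_def)
    then obtain x where j': "j' = pivot a" and d: "d = (x, pivot a, Suc a)"
      using reduct_col_pivot_not_None by blast
    have IH: "(\<Sum>l\<in>{1..p}. letter_action p q (l, j, Suc a) (letter_action p q (l, j', a) (Poly_Mapping.single v 1)))
        = (if j = j' then Poly_Mapping.single v 1 else (0 :: 'k vec))"
      if "reduced p q v" "length v \<le> length u" "j \<in> {1..q}" "j' \<in> {1..q}" for v j j'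
    proof -
      have "length v < length w" using that(2) w by simp
      with "1.IH" that(1,3,4) show ?thesis by blast
    qed
    show ?thesis
      using col_action_overlap[OF assms(1,2) "1.prems"(1) _ IH] "1.prems"(3) by (simp add: w d j')
  qed
qed

lemma row_action:
  assumes "2 \<le> p" "2 \<le> q" "i \<in> {1..p}" "i' \<in> {1..p}" "reduced_vec p q v"
  shows "(\<Sum>l\<in>{1..q}. letter_action p q (i, l, a) (letter_action p q (i', l, Suc a) v))
    = (if i = i' then v else (0 :: 'k::field vec))"
proof -
  let ?F = "\<lambda>v. \<Sum>l\<in>{1..q}. letter_action p q (i, l, a) (letter_action p q (i', l, Suc a) v) :: 'k vec"
  have "lin ?F" by (intro lin_sum_maps lin_comp[OF lin_letter_action lin_letter_action])
  then show ?thesis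
  proof (rule lin_eq_on_keys[where h="\<lambda>v. if i = i' then v else 0", OF _ lin_if_zero])
    fix w assume "w \<in> Poly_Mapping.keys v"
    with assms(5) have "reduced p q w" by (simp add: reduced_vec_def)
    then show "?F (Poly_Mapping.single w 1) = (if i = i' then Poly_Mapping.single w 1 else 0)"
      by (simp only: row_action_single[OF assms(1-4)])
  qed
qed

lemma col_action:
  assumes "2 \<le> p" "2 \<le> q" "j \<in> {1..q}" "j' \<in> {1..q}" "reduced_vec p q v"
  shows "(\<Sum>l\<in>{1..p}. letter_action p q (l, j, Suc a) (letter_action p q (l, j', a) v))
    = (if j = j' then v else (0 :: 'k::field vec))"
proof -
  let ?F = "\<lambda>v. \<Sum>l\<in>{1..p}. letter_action p q (l, j, Suc a) (letter_action p q (l, j', a) v) :: 'k vec"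
  have "lin ?F" by (intro lin_sum_maps lin_comp[OF lin_letter_action lin_letter_action])
  then show ?thesis
  proof (rule lin_eq_on_keys[where h="\<lambda>v. if j = j' then v else 0", OF _ lin_if_zero])
    fix w assume "w \<in> Poly_Mapping.keys v"
    with assms(5) have "reduced p q w" by (simp add: reduced_vec_def)
    then show "?F (Poly_Mapping.single w 1) = (if j = j' then Poly_Mapping.single w 1 else 0)"
      by (simp only: col_action_single[OF assms(1-4)])
  qed
qed

definition action :: "nat \<Rightarrow> nat \<Rightarrow> (gen word \<Rightarrow>\<^sub>0 'k::field) \<Rightarrow> 'k vec \<Rightarrow> 'k vec" where
  "action p q P v = linext (\<lambda>w. foldr (letter_action p q) (letters w) v) P"

lemma lin_foldr_letter_action: "lin (foldr (letter_action p q) xs :: 'k::field vec \<Rightarrow> _)"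
  by (induction xs) (simp_all add: lin_id comp_def lin_comp[OF lin_letter_action])

lemma reduced_vec_foldr_letter_action:
  "reduced_vec p q v \<Longrightarrow> reduced_vec p q (foldr (letter_action p q) xs (v :: 'k::field vec))"
  by (induction xs) (simp_all add: reduced_vec_letter_action)

lemma lin_action_left: "lin (\<lambda>P. action p q P v)"
  by (simp add: action_def lin_linext)

lemma lin_action: "lin (action p q P)"
  by (simp add: lin_def action_def linext_def lin_add[OF lin_foldr_letter_action] lin_sc[OF lin_foldr_letter_action]
      sc_add sc_sc sum.distrib sc_sum mult.commute)

lemma action_single: "action p q (Poly_Mapping.single w c) v = sc c (foldr (letter_action p q) (letters w) v)"
  by (simp add: action_def linext_single)

lemma action_mult: "action p q (P * Q) v = action p q P (action p q Q v)"
proof (rule bilin_eq[where F="\<lambda>P Q. action p q (P * Q) v" and G="\<lambda>P Q. action p q P (action p q Q v)"])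
  show "lin (\<lambda>P. action p q (P * Q) v)" "lin (\<lambda>Q. action p q (P * Q) v)" for P Q
    by (simp_all add: lin_comp[OF lin_action_left lin_mult_left] lin_comp[OF lin_action_left lin_mult_right])
  show "lin (\<lambda>P. action p q P (action p q Q v))" "lin (\<lambda>Q. action p q P (action p q Q v))" for P Q
    by (simp_all add: lin_action_left lin_comp[OF lin_action lin_action_left])
qed (simp add: mult_single action_single)

lemma action_one: "action p q 1 v = v"
  by (simp add: action_single flip: single_one)

lemma action_X: "action p q (X i j a) v = letter_action p q (i, j, a) v"
  by (simp add: X_def action_single)

lemma reduced_vec_action:
  assumes "reduced_vec p q v"
  shows "reduced_vec p q (action p q P (v :: 'k::field vec))"
  unfolding reduced_vec_def
proof
  fix w assume "w \<in> Poly_Mapping.keys (action p q P v)"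
  then have "w \<in> (\<Union>u\<in>Poly_Mapping.keys P. Poly_Mapping.keys (foldr (letter_action p q) (letters u) v))"
    unfolding action_def by (rule subsetD[OF keys_linext])
  then obtain u where "w \<in> Poly_Mapping.keys (foldr (letter_action p q) (letters u) v)"
    by blast
  then show "reduced p q w"
    using reduced_vec_foldr_letter_action[OF assms] by (simp add: reduced_vec_def)
qed

lemma action_rel:
  assumes "2 \<le> p" "2 \<le> q" "r \<in> hrels p q" "reduced_vec p q v"
  shows "action p q r v = (0 :: 'k::field vec)"
  using assms(3)
proof (cases rule: hrels_cases)
  case (out_of_range i j a)
  then show ?thesis by (auto simp: action_X letter_action_def in_range_def)
next
  case (row i i' a)
  then have "action p q r v = (\<Sum>l\<in>{1..q}. letter_action p q (i, l, a) (letter_action p q (i', l, Suc a) v)) - (if i = i' then v else 0)"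
    by (simp add: lin_diff[OF lin_action_left] lin_sum[OF lin_action_left] action_mult action_X
        action_one lin_zero[OF lin_action_left])
  then show ?thesis
    unfolding row_action[OF assms(1,2) row(2,3) assms(4)] by simp
next
  case (col j j' a)
  then have "action p q r v = (\<Sum>l\<in>{1..p}. letter_action p q (l, j, Suc a) (letter_action p q (l, j', a) v)) - (if j = j' then v else 0)"
    by (simp add: lin_diff[OF lin_action_left] lin_sum[OF lin_action_left] action_mult action_X
        action_one lin_zero[OF lin_action_left])
  then show ?thesis
    unfolding col_action[OF assms(1,2) col(2,3) assms(4)] by simp
qed

lemma action_ideal:
  assumes "2 \<le> p" "2 \<le> q" "x \<in> ideal_of (hrels p q)" "reduced_vec p q v"
  shows "action p q x v = (0 :: 'k::field vec)"
  using assms(3,4)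
proof (induction x arbitrary: v rule: ideal_of.induct)
  case zero
  then show ?case by (simp add: action_def)
next
  case (gen r a b)
  then show ?case
    by (simp add: action_mult action_rel[OF assms(1,2)] reduced_vec_action lin_zero[OF lin_action])
next
  case (add x y)
  then show ?case by (simp add: lin_add[OF lin_action_left])
qed

lemma nonzero_hrels:
  assumes "2 \<le> p" "2 \<le> q"
  shows "nonzero_alg (hrels p q :: (gen word \<Rightarrow>\<^sub>0 'k::field) set)"
  unfolding nonzero_alg_def
proof
  assume "(1 :: gen word \<Rightarrow>\<^sub>0 'k) \<in> ideal_of (hrels p q)"
  then have "action p q (1 :: gen word \<Rightarrow>\<^sub>0 'k) (Poly_Mapping.single [] 1) = 0"
    by (rule action_ideal[OF assms]) (simp add: reduced_vec_def)
  then show False by (metis action_one lookup_single_eq lookup_zero zero_neq_one)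
qed

theorem proposition5p2:
  fixes m n :: nat
  assumes "m \<ge> 2" and "n \<ge> 2"
  shows "hopf_galois_system
           (hrels m m :: (gen word \<Rightarrow>\<^sub>0 'k::field) set) (hrels n n) (hrels m n) (hrels n m)
           (ext (gcop m)) (heps m) (ext (gcop n)) (heps n)
           (ext (gcop m)) (ext (gcop n)) (ext (gcop n)) (ext (gcop m))"
  unfolding hopf_galois_system_def
  using assms
  by (simp add: nonzero_hrels bialgebra_hrels alg_map_comult comult_coassoc lcounit_comult rcounit_comult
      lin_map_antipode antipode_comult_left antipode_comult_right exI[where x=antipode])

end
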